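(* Let $p\in[1,\infty]$ and let $H:\ell^p(\mathbb{Z})\to\ell^p(\mathbb{Z})$ be given by $(Hx)_n=x_{n+1}+x_{n-1}+v(n)x_n$, where $v:\mathbb{Z}\to\mathbb{Z}$ is $K$-periodic for some $K\in\mathbb{N}$. Then the following are equivalent: (i) the finite section method for $H$ is applicable; (ii) the monodromy matrix $M(0)$ of $H$ satisfies $|\operatorname{tr}(M(0))|>2$.
   Context: For $E\in\mathbb{R}$, transfer matrices $T(n,E)=\begin{pmatrix}E-v(n)&-1\\1&0\end{pmatrix}$ and monodromy matrix $M(E)=T(K-1,E)\cdots T(1,E)T(0,E)$. Finite section method (FSM): for a bounded operator $A$ on $\ell^p(\mathbb{Z})$ with matrix $(a_{ij})_{i,j\in\mathbb{Z}}$, let $A_n=(a_{ij})_{i,j=-n}^n$; the FSM is applicable if $A$ is invertible, $A_n$ are invertible for all sufficiently large $n$, and their inverses (embedded into two-sided infinite matrices) converge strongly to $A^{-1}$. *)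

theory Defs
  imports "HOL-Analysis.Analysis"
begin

definition lp_space :: "ereal \<Rightarrow> (int \<Rightarrow> complex) set" where
  "lp_space p = (if p = \<infinity> then {x. bounded (range x)}
                 else {x. (\<lambda>k. norm (x k) powr real_of_ereal p) summable_on UNIV})"

definition lp_norm :: "ereal \<Rightarrow> (int \<Rightarrow> complex) \<Rightarrow> real" where
  "lp_norm p x = (if p = \<infinity> then (SUP k. norm (x k))
                  else (\<Sum>\<^sub>\<infinity>k. norm (x k) powr real_of_ereal p) powr (1 / real_of_ereal p))"

definition schroedinger :: "(int \<Rightarrow> int) \<Rightarrow> (int \<Rightarrow> complex) \<Rightarrow> (int \<Rightarrow> complex)" where
  "schroedinger v x = (\<lambda>n. x (n + 1) + x (n - 1) + of_int (v n) * x n)"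

definition proj :: "nat \<Rightarrow> (int \<Rightarrow> complex) \<Rightarrow> (int \<Rightarrow> complex)" where
  "proj n x = (\<lambda>k. if \<bar>k\<bar> \<le> int n then x k else 0)"

definition fs_dom :: "nat \<Rightarrow> (int \<Rightarrow> complex) set" where
  "fs_dom n = {x. \<forall>k. int n < \<bar>k\<bar> \<longrightarrow> x k = 0}"

text \<open>The finite section A_n = (a_ij), i,j = -n..n, of the operator A, acting on
fs_dom n (this is exactly the matrix A_n; a_ij = (A e_j)_i).\<close>
definition finite_section ::
  "((int \<Rightarrow> complex) \<Rightarrow> (int \<Rightarrow> complex)) \<Rightarrow> nat \<Rightarrow> (int \<Rightarrow> complex) \<Rightarrow> (int \<Rightarrow> complex)" where
  "finite_section A n x = proj n (A (proj n x))"

definition fs_invertible :: "((int \<Rightarrow> complex) \<Rightarrow> (int \<Rightarrow> complex)) \<Rightarrow> nat \<Rightarrow> bool" where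
  "fs_invertible A n \<longleftrightarrow> bij_betw (finite_section A n) (fs_dom n) (fs_dom n)"

text \<open>The inverse of A_n embedded into a two-sided infinite matrix (zeros elsewhere).\<close>
definition fs_inverse_embedded ::
  "((int \<Rightarrow> complex) \<Rightarrow> (int \<Rightarrow> complex)) \<Rightarrow> nat \<Rightarrow> (int \<Rightarrow> complex) \<Rightarrow> (int \<Rightarrow> complex)" where
  "fs_inverse_embedded A n x = inv_into (fs_dom n) (finite_section A n) (proj n x)"

text \<open>A bounded operator A on l^p is invertible: it is a bounded linear bijection of
l^p onto itself (the inverse is then bounded by the open mapping theorem).\<close>
definition lp_bounded_linear :: "ereal \<Rightarrow> ((int \<Rightarrow> complex) \<Rightarrow> (int \<Rightarrow> complex)) \<Rightarrow> bool" where
  "lp_bounded_linear p A \<longleftrightarrow>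
     (\<forall>x y. A (\<lambda>k. x k + y k) = (\<lambda>k. A x k + A y k)) \<and>
     (\<forall>c x. A (\<lambda>k. c * x k) = (\<lambda>k. c * A x k)) \<and> A ` lp_space p \<subseteq> lp_space p \<and>
     (\<exists>C. \<forall>x\<in>lp_space p. lp_norm p (A x) \<le> C * lp_norm p x)"

definition lp_invertible :: "ereal \<Rightarrow> ((int \<Rightarrow> complex) \<Rightarrow> (int \<Rightarrow> complex)) \<Rightarrow> bool" where
  "lp_invertible p A \<longleftrightarrow> lp_bounded_linear p A \<and> bij_betw A (lp_space p) (lp_space p)"

text \<open>For p = infinity, where P_n does not converge strongly
to the identity, the standard convention (P-strong convergence) is used:
||P_m (B_n - B)|| -> 0 and ||(B_n - B) P_m|| -> 0 for every m.\<close>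
definition strongly_converges ::
  "ereal \<Rightarrow> (nat \<Rightarrow> (int \<Rightarrow> complex) \<Rightarrow> (int \<Rightarrow> complex)) \<Rightarrow> ((int \<Rightarrow> complex) \<Rightarrow> (int \<Rightarrow> complex)) \<Rightarrow> bool" where
  "strongly_converges p Bs B \<longleftrightarrow>
     (if p = \<infinity> then
        (\<forall>m. \<forall>\<epsilon>>0. \<forall>\<^sub>F n in sequentially. \<forall>x\<in>lp_space p. lp_norm p x \<le> 1 \<longrightarrow>
            lp_norm p (proj m (\<lambda>k. Bs n x k - B x k)) \<le> \<epsilon> \<and>
            lp_norm p (\<lambda>k. Bs n (proj m x) k - B (proj m x) k) \<le> \<epsilon>)
      else
        (\<forall>x\<in>lp_space p. ((\<lambda>n. lp_norm p (\<lambda>k. Bs n x k - B x k)) \<longlongrightarrow> 0) sequentially))"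

definition fsm_applicable :: "ereal \<Rightarrow> ((int \<Rightarrow> complex) \<Rightarrow> (int \<Rightarrow> complex)) \<Rightarrow> bool" where
  "fsm_applicable p A \<longleftrightarrow>
     lp_invertible p A \<and>
     (\<forall>\<^sub>F n in sequentially. fs_invertible A n) \<and>
     strongly_converges p (fs_inverse_embedded A) (inv_into (lp_space p) A)"

definition transfer :: "(int \<Rightarrow> int) \<Rightarrow> int \<Rightarrow> real \<Rightarrow> real^2^2" where
  "transfer v n E = vector [vector [E - real_of_int (v n), -1], vector [1, 0]]"

fun transfer_prod :: "(int \<Rightarrow> int) \<Rightarrow> nat \<Rightarrow> real \<Rightarrow> real^2^2" where
  "transfer_prod v 0 E = mat 1"
| "transfer_prod v (Suc k) E = transfer v (int k) E ** transfer_prod v k E"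

definition monodromy :: "(int \<Rightarrow> int) \<Rightarrow> nat \<Rightarrow> real \<Rightarrow> real^2^2" where
  "monodromy v K E = transfer_prod v K E"

end

theory Submission
  imports Defs
begin

text \<open>Everything rests on the Floquet theory of the recurrence
  \<open>u (n + 1) + u (n - 1) + v n * u n = 0\<close>, whose solutions satisfy
  \<open>u (n + 2K) - tr * u (n + K) + u n = 0\<close> with \<open>tr = trace (monodromy v K 0)\<close>.

  If \<open>|tr| \<le> 2\<close>, \<open>H\<close> is not invertible. For \<open>p < \<infinity>\<close> the equation \<open>H x = \<delta>\<^sub>0\<close> has no
  solution in \<open>l\<^sup>p\<close>: on each half-line \<open>x\<close> agrees with a solution, and a conserved positive
  semidefinite quadratic form forces a decaying solution to vanish. For \<open>p = \<infinity>\<close> there is a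
  bounded nonzero solution of \<open>H x = 0\<close>.

  If \<open>|tr| > 2\<close>, the multipliers \<open>mu\<close> and \<open>1/mu\<close> with \<open>|mu| < 1\<close> are irrational roots of
  \<open>x^2 - tr x + 1\<close> because \<open>tr\<close> is an integer, so the Bloch solutions \<open>up\<close> and \<open>um\<close> never
  vanish. The Green's function built from them decays exponentially and gives \<open>H\<^sup>-\<^sup>1\<close> on every
  \<open>l\<^sup>p\<close>. The inverse of the finite section \<open>A\<^sub>n\<close> is the Green's function of the Dirichlet
  problem on \<open>[-n, n]\<close>, built from the solutions vanishing at \<open>\<plusminus>(n + 1)\<close>; comparing the two
  explicit formulas shows that their difference is exponentially small away from the boundary of
  the box, and a Schur test turns this into strong convergence.\<close>

definition is_solution :: "(int \<Rightarrow> int) \<Rightarrow> (int \<Rightarrow> real) \<Rightarrow> bool" where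
  "is_solution v u \<longleftrightarrow> (\<forall>n. u (n+1) + u (n-1) + real_of_int (v n) * u n = 0)"

lemma int_induct_both_ways:
  fixes Q :: "int \<Rightarrow> bool"
  assumes "Q m" "\<And>n. Q n \<Longrightarrow> Q (n+1)" "\<And>n. Q n \<Longrightarrow> Q (n-1)"
  shows "Q n"
  using assms by (induction n rule: int_induct[where k=m]) auto

lemma solution_next: "is_solution v u \<Longrightarrow> u (n+2) = - u n - real_of_int (v (n+1)) * u (n+1)"
  unfolding is_solution_def by (erule allE[where x="n+1"]) (simp add: algebra_simps)

lemma solution_prev: "is_solution v u \<Longrightarrow> u (n-1) = - u (n+1) - real_of_int (v n) * u n"
  unfolding is_solution_def by (erule allE[where x="n"]) (simp add: algebra_simps)

lemma solution_eqI:
  assumes u: "is_solution v u" and w: "is_solution v w" and "u m = w m" "u (m+1) = w (m+1)"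
  shows "u n = w n"
proof -
  have "u n = w n \<and> u (n+1) = w (n+1)"
  proof (rule int_induct_both_ways[where m=m and Q="\<lambda>n. u n = w n \<and> u (n+1) = w (n+1)"])
    fix n assume "u n = w n \<and> u (n+1) = w (n+1)"
    then show "u (n+1) = w (n+1) \<and> u (n+1+1) = w (n+1+1)"
      using solution_next[OF u, of n] solution_next[OF w, of n] by (simp add: add.assoc)
  next
    fix n assume "u n = w n \<and> u (n+1) = w (n+1)"
    then show "u (n-1) = w (n-1) \<and> u (n-1+1) = w (n-1+1)"
      using solution_prev[OF u, of n] solution_prev[OF w, of n] by simp
  qed (use assms in simp)
  then show ?thesis by simp
qed

lemma solution_lincomb:
  assumes "is_solution v u" "is_solution v w"
  shows "is_solution v (\<lambda>n. a * u n + b * w n)"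
  unfolding is_solution_def
proof
  fix n
  have "a * (u (n+1) + u (n-1) + real_of_int (v n) * u n) + b * (w (n+1) + w (n-1) + real_of_int (v n) * w n) = 0"
    using assms by (simp add: is_solution_def)
  then show "a * u (n+1) + b * w (n+1) + (a * u (n-1) + b * w (n-1)) + real_of_int (v n) * (a * u n + b * w n) = 0"
    by (simp add: algebra_simps)
qed

lemma solution_translate:
  assumes "is_solution v u"
  shows "is_solution (\<lambda>k. v (k + m)) (\<lambda>n. u (n + m))"
  unfolding is_solution_def
proof
  fix n
  have "u (n + m + 1) + u (n + m - 1) + real_of_int (v (n + m)) * u (n + m) = 0"
    using assms unfolding is_solution_def by blast
  then show "u (n + 1 + m) + u (n - 1 + m) + real_of_int (v (n + m)) * u (n + m) = 0"
    by (simp add: algebra_simps)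
qed

definition wronskian :: "(int \<Rightarrow> real) \<Rightarrow> (int \<Rightarrow> real) \<Rightarrow> int \<Rightarrow> real" where
  "wronskian u w n = u (n-1) * w n - u n * w (n-1)"

lemma wronskian_const:
  assumes "is_solution v u" "is_solution v w"
  shows "wronskian u w n = wronskian u w m"
proof -
  have step: "wronskian u w (n+1) = wronskian u w n" for n
  proof -
    have "u n * (w (n+1) + w (n-1) + v n * w n) - w n * (u (n+1) + u (n-1) + v n * u n) = 0"
      using assms unfolding is_solution_def by simp
    then show ?thesis unfolding wronskian_def by (simp add: algebra_simps)
  qed
  show ?thesis
  proof (rule int_induct_both_ways[where m=m and Q="\<lambda>n. wronskian u w n = wronskian u w m"])
    fix n assume "wronskian u w n = wronskian u w m"
    then show "wronskian u w (n-1) = wronskian u w m" using step[of "n-1"] by simp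
  qed (simp_all add: step)
qed

lemma solution_Ints:
  assumes u: "is_solution v u" and "u m \<in> \<int>" "u (m+1) \<in> \<int>"
  shows "u n \<in> \<int>"
proof -
  have "u n \<in> \<int> \<and> u (n+1) \<in> \<int>"
  proof (rule int_induct_both_ways[where m=m and Q="\<lambda>n. u n \<in> \<int> \<and> u (n+1) \<in> \<int>"])
    fix n assume "u n \<in> \<int> \<and> u (n+1) \<in> \<int>"
    then show "u (n+1) \<in> \<int> \<and> u (n+1+1) \<in> \<int>"
      using solution_next[OF u, of n] by (simp add: add.assoc)
  next
    fix n assume "u n \<in> \<int> \<and> u (n+1) \<in> \<int>"
    then show "u (n-1) \<in> \<int> \<and> u (n-1+1) \<in> \<int>"
      using solution_prev[OF u, of n] by simp
  qed (use assms in simp)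
  then show ?thesis by simp
qed

text \<open>The solution with \<open>u 0 = a\<close> and \<open>u (-1) = b\<close>: \<open>forward_values v a b k = u (k - 1)\<close> and
  \<open>backward_values v a b k = u (-k)\<close>.\<close>

fun forward_values :: "(int \<Rightarrow> int) \<Rightarrow> real \<Rightarrow> real \<Rightarrow> nat \<Rightarrow> real" where
  "forward_values v a b 0 = b"
| "forward_values v a b (Suc 0) = a"
| "forward_values v a b (Suc (Suc k)) =
     - forward_values v a b k - real_of_int (v (int k)) * forward_values v a b (Suc k)"

fun backward_values :: "(int \<Rightarrow> int) \<Rightarrow> real \<Rightarrow> real \<Rightarrow> nat \<Rightarrow> real" where
  "backward_values v a b 0 = a"
| "backward_values v a b (Suc 0) = b"
| "backward_values v a b (Suc (Suc k)) =
     - backward_values v a b k - real_of_int (v (- int k - 1)) * backward_values v a b (Suc k)"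

definition solution_from :: "(int \<Rightarrow> int) \<Rightarrow> real \<Rightarrow> real \<Rightarrow> int \<Rightarrow> real" where
  "solution_from v a b n =
     (if n \<ge> -1 then forward_values v a b (nat (n+1)) else backward_values v a b (nat (-n)))"

lemma solution_from_nonpos: "n \<le> 0 \<Longrightarrow> solution_from v a b n = backward_values v a b (nat (-n))"
proof -
  assume "n \<le> 0"
  then consider "n = 0" | "n = -1" | "n < -1" by linarith
  then show ?thesis by cases (simp_all add: solution_from_def numeral_2_eq_2)
qed

lemma solution_from_0: "solution_from v a b 0 = a"
  and solution_from_minus1: "solution_from v a b (-1) = b"
  by (simp_all add: solution_from_def)

lemma solution_from_is_solution: "is_solution v (solution_from v a b)"
  unfolding is_solution_def
proof
  fix n :: int
  show "solution_from v a b (n + 1) + solution_from v a b (n - 1) + real_of_int (v n) * solution_from v a b n = 0"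
  proof (cases "n \<ge> 0")
    case True
    then obtain k where n: "n = int k" by (metis nonneg_int_cases)
    have "solution_from v a b (n+1) = forward_values v a b (Suc (Suc k))"
      "solution_from v a b (n-1) = forward_values v a b k"
      "solution_from v a b n = forward_values v a b (Suc k)"
      using n by (simp_all add: solution_from_def nat_add_distrib)
    then show ?thesis using n by simp
  next
    case False
    then obtain k where n: "n = - int k - 1" by (intro that[of "nat (- n - 1)"]) simp
    have "solution_from v a b (n+1) = backward_values v a b k"
      "solution_from v a b (n-1) = backward_values v a b (Suc (Suc k))"
      "solution_from v a b n = backward_values v a b (Suc k)"
      using n False by (subst solution_from_nonpos; auto simp: nat_add_distrib)+
    then show ?thesis using n by simp
  qed
qed

lemma solution_exists: "\<exists>u. is_solution v u \<and> u m = a \<and> u (m-1) = b"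
proof -
  have "is_solution v (\<lambda>n. solution_from (\<lambda>k. v (k + m)) a b (n - m))"
    using solution_translate[OF solution_from_is_solution[of "\<lambda>k. v (k + m)" a b], of "- m"] by simp
  then show ?thesis by (intro exI[of _ "\<lambda>n. solution_from (\<lambda>k. v (k + m)) a b (n - m)"])
      (simp add: solution_from_0 solution_from_minus1)
qed

definition fund_c :: "(int \<Rightarrow> int) \<Rightarrow> int \<Rightarrow> real" where "fund_c v = solution_from v 1 0"
definition fund_s :: "(int \<Rightarrow> int) \<Rightarrow> int \<Rightarrow> real" where "fund_s v = solution_from v 0 1"

lemma fund_c_solution: "is_solution v (fund_c v)" and fund_s_solution: "is_solution v (fund_s v)"
  by (simp_all add: fund_c_def fund_s_def solution_from_is_solution)

lemma fund_c_0: "fund_c v 0 = 1" and fund_c_minus1: "fund_c v (-1) = 0"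
  and fund_s_0: "fund_s v 0 = 0" and fund_s_minus1: "fund_s v (-1) = 1"
  by (simp_all add: fund_c_def fund_s_def solution_from_0 solution_from_minus1)

lemma solution_fund_expansion:
  assumes "is_solution v u"
  shows "u n = u 0 * fund_c v n + u (-1) * fund_s v n"
  by (rule solution_eqI[OF assms solution_lincomb[OF fund_c_solution fund_s_solution], where m="-1"])
     (simp_all add: fund_c_0 fund_c_minus1 fund_s_0 fund_s_minus1)

lemma wronskian_fund: "wronskian (fund_c v) (fund_s v) n = - 1"
proof -
  have "wronskian (fund_c v) (fund_s v) n = wronskian (fund_c v) (fund_s v) 0"
    by (rule wronskian_const[OF fund_c_solution fund_s_solution])
  also have "\<dots> = -1" by (simp add: wronskian_def fund_c_0 fund_c_minus1 fund_s_0 fund_s_minus1)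
  finally show ?thesis .
qed

lemma fund_c_Ints: "fund_c v n \<in> \<int>" and fund_s_Ints: "fund_s v n \<in> \<int>"
  by (rule solution_Ints[OF fund_c_solution, where m="-1"]; simp add: fund_c_0 fund_c_minus1)
     (rule solution_Ints[OF fund_s_solution, where m="-1"]; simp add: fund_s_0 fund_s_minus1)

lemma transfer_prod_fund:
  "transfer_prod v k 0 $ 1 $ 1 = fund_c v (int k) \<and> transfer_prod v k 0 $ 1 $ 2 = fund_s v (int k) \<and>
   transfer_prod v k 0 $ 2 $ 1 = fund_c v (int k - 1) \<and> transfer_prod v k 0 $ 2 $ 2 = fund_s v (int k - 1)"
proof (induction k)
  case 0
  then show ?case by (simp add: mat_def fund_c_0 fund_c_minus1 fund_s_0 fund_s_minus1)
next
  case (Suc k)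
  have "fund_c v (int k + 1) = - fund_c v (int k - 1) - real_of_int (v (int k)) * fund_c v (int k)"
    "fund_s v (int k + 1) = - fund_s v (int k - 1) - real_of_int (v (int k)) * fund_s v (int k)"
    using solution_prev[OF fund_c_solution, of v "int k"] solution_prev[OF fund_s_solution, of v "int k"]
    by simp_all
  with Suc show ?case by (simp add: matrix_matrix_mult_def sum_2 transfer_def algebra_simps)
qed

lemma trace_monodromy: "trace (monodromy v K 0) = fund_c v (int K) + fund_s v (int K - 1)"
  using transfer_prod_fund[of v K] by (simp add: trace_def monodromy_def sum_2)

lemma periodic_mod:
  assumes per: "\<And>n. g (n + int K) = g n"
  shows "g (n mod int K) = g n"
proof -
  have "g (r + q * int K) = g r" for r q
  proof (induction q rule: int_induct[where k=0])
    case (step1 i)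
    then show ?case using per[of "r + i * int K"] by (simp add: algebra_simps)
  next
    case (step2 i)
    then show ?case using per[of "r + (i - 1) * int K"] by (simp add: algebra_simps)
  qed simp
  from this[of "n mod int K" "n div int K"] show ?thesis by simp
qed

lemma periodic_range:
  assumes "K \<ge> 1" and "\<And>n. g (n + int K) = g n"
  shows "g n \<in> g ` {0..<int K}"
proof -
  have "n mod int K \<in> {0..<int K}" using assms(1) by simp
  then show ?thesis using periodic_mod[of g K n] assms(2) by (metis image_eqI)
qed

lemma periodic_bounded:
  fixes g :: "int \<Rightarrow> real"
  assumes "K \<ge> 1" and "\<And>n. g (n + int K) = g n"
  shows "\<exists>B. \<forall>n. \<bar>g n\<bar> \<le> B"
proof
  show "\<forall>n. \<bar>g n\<bar> \<le> Max (abs ` g ` {0..<int K})"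
    using periodic_range[of K g, OF assms] by (auto intro: Max_ge)
qed

locale periodic_potential =
  fixes v :: "int \<Rightarrow> int" and K :: nat
  assumes K1: "K \<ge> 1" and per: "\<forall>n. v (n + int K) = v n"
begin

definition tr :: real where "tr = fund_c v (int K) + fund_s v (int K - 1)"

lemma tr_Ints: "tr \<in> \<int>"
  unfolding tr_def using fund_c_Ints fund_s_Ints by (simp add: Ints_add)

lemma fund_det: "fund_c v (int K) * fund_s v (int K - 1) - fund_s v (int K) * fund_c v (int K - 1) = 1"
  using wronskian_fund[of v "int K"] unfolding wronskian_def by (simp add: algebra_simps)

lemma solution_shift_period: "is_solution v u \<Longrightarrow> is_solution v (\<lambda>n. u (n + int K))"
  using solution_translate[of v u "int K"] per by simp

text \<open>Cayley-Hamilton for the monodromy matrix, read off on solutions.\<close>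

lemma solution_period_recurrence:
  assumes u: "is_solution v u"
  shows "u (n + 2 * int K) - tr * u (n + int K) + u n = 0"
proof -
  define w where "w n = u (n + int K)" for n
  have w: "is_solution v w" unfolding w_def by (rule solution_shift_period[OF u])
  define z where "z n = w (n + int K) - tr * w n + u n" for n
  have "is_solution v (\<lambda>n. 1 * (1 * w (n + int K) + (-tr) * w n) + 1 * u n)"
    by (intro solution_lincomb solution_shift_period w u)
  then have z: "is_solution v z" unfolding z_def by simp
  define c s c' s' where "c = fund_c v (int K)" and "s = fund_s v (int K)"
    and "c' = fund_c v (int K - 1)" and "s' = fund_s v (int K - 1)"
  have det: "c * s' - s * c' = 1" unfolding c_def s_def c'_def s'_def by (rule fund_det)
  have u_exp: "u (int K) = u 0 * c + u (-1) * s" "u (int K - 1) = u 0 * c' + u (-1) * s'"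
    and w_exp: "w (int K) = w 0 * c + w (-1) * s" "w (int K - 1) = w 0 * c' + w (-1) * s'"
    unfolding c_def s_def c'_def s'_def by (simp_all only: solution_fund_expansion[OF u, symmetric]
        solution_fund_expansion[OF w, symmetric])
  have w_init: "w 0 = u (int K)" "w (-1) = u (int K - 1)" unfolding w_def by simp_all
  have "z 0 = u 0 * (1 - (c * s' - s * c'))"
    unfolding z_def tr_def c_def[symmetric] s'_def[symmetric]
    by (simp add: w_exp w_init u_exp algebra_simps)
  moreover have "z (-1) = u (-1) * (1 - (c * s' - s * c'))"
    unfolding z_def tr_def c_def[symmetric] s'_def[symmetric]
    by (simp add: w_exp w_init u_exp algebra_simps)
  ultimately have "z n = 0" for n
    using solution_eqI[OF z, of "\<lambda>_. 0" "-1" n] det by (simp add: is_solution_def)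
  then show ?thesis unfolding z_def w_def by (simp add: algebra_simps mult_2)
qed

end


section \<open>If \<open>|tr| \<le> 2\<close>, then \<open>H\<close> is not invertible\<close>

lemma recurrence_invariant:
  fixes a :: "nat \<Rightarrow> real"
  assumes rec: "\<And>m. a (Suc (Suc m)) = t * a (Suc m) - a m"
  shows "a (Suc m)^2 - t * a m * a (Suc m) + (a m)^2 = a 1 ^2 - t * a 0 * a 1 + (a 0)^2"
proof (induction m)
  case (Suc m)
  have "a (Suc (Suc m))^2 - t * a (Suc m) * a (Suc (Suc m)) + (a (Suc m))^2
      = a (Suc m)^2 - t * a m * a (Suc m) + (a m)^2"
    unfolding rec by (simp add: power2_eq_square algebra_simps)
  then show ?case using Suc by simp
qed simp

text \<open>For \<open>|t| \<le> 2\<close> the invariant quadratic form is positive semidefinite, so it vanishes on a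
  sequence that gets arbitrarily small, and then \<open>|a m|\<close> is constant.\<close>

lemma elliptic_recurrence_zero:
  fixes a :: "nat \<Rightarrow> real"
  assumes rec: "\<And>m. a (Suc (Suc m)) = t * a (Suc m) - a m"
    and t: "\<bar>t\<bar> \<le> 2"
    and small: "\<And>\<epsilon>. \<epsilon> > 0 \<Longrightarrow> \<exists>m. \<bar>a m\<bar> < \<epsilon> \<and> \<bar>a (Suc m)\<bar> < \<epsilon>"
  shows "a 0 = 0"
proof -
  define Q where "Q x y = y^2 - t * x * y + x^2" for x y :: real
  have Q_sos: "Q x y = (y - t/2 * x)^2 + (1 - t^2/4) * x^2" for x y
    unfolding Q_def by (simp add: power2_eq_square algebra_simps)
  have "\<bar>t\<bar>^2 \<le> 2^2" by (rule power_mono) (use t in auto)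
  then have t2: "1 - t^2/4 \<ge> 0" by simp
  have Q_small: "Q x y < 4 * \<epsilon>^2" if "\<bar>x\<bar> < \<epsilon>" "\<bar>y\<bar> < \<epsilon>" for x y \<epsilon>
  proof -
    have "\<bar>t * x * y\<bar> \<le> 2 * \<bar>x\<bar> * \<bar>y\<bar>"
      unfolding abs_mult using t by (intro mult_right_mono) auto
    then have "Q x y \<le> (\<bar>x\<bar> + \<bar>y\<bar>)^2" unfolding Q_def by (simp add: power2_eq_square algebra_simps)
    also have "\<dots> < (2 * \<epsilon>)^2" using that by (intro power_strict_mono) auto
    finally show ?thesis by (simp add: power_mult_distrib)
  qed
  define I where "I = Q (a 0) (a 1)"
  have inv: "Q (a m) (a (Suc m)) = I" for m
    unfolding Q_def I_def using recurrence_invariant[of a t, OF rec] by simp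
  have "I \<ge> 0" unfolding I_def Q_sos using t2 by simp
  moreover have "\<not> I > 0"
  proof
    assume "I > 0"
    then have "sqrt I / 2 > 0" by simp
    then obtain m where "\<bar>a m\<bar> < sqrt I / 2" "\<bar>a (Suc m)\<bar> < sqrt I / 2" using small by blast
    then have "I < 4 * (sqrt I / 2)^2" using Q_small inv by metis
    with \<open>I > 0\<close> show False by (simp add: power_divide)
  qed
  ultimately have I0: "I = 0" by simp
  have "\<bar>a (Suc m)\<bar> = \<bar>a m\<bar>" for m
  proof -
    have h1: "a (Suc m) = t/2 * a m" and h2: "(1 - t^2/4) * (a m)^2 = 0"
      using inv[of m] t2 unfolding I0 Q_sos by (simp_all add: add_nonneg_eq_0_iff)
    have "(a (Suc m))^2 = t^2/4 * (a m)^2" unfolding h1 by (simp add: power2_eq_square)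
    also have "\<dots> = (a m)^2" using h2 by (simp add: algebra_simps)
    finally have "(a (Suc m))^2 = (a m)^2" .
    then show ?thesis by (metis real_sqrt_abs)
  qed
  then have const: "\<bar>a m\<bar> = \<bar>a 0\<bar>" for m by (induction m) auto
  show "a 0 = 0"
  proof (rule ccontr)
    assume "a 0 \<noteq> 0"
    then obtain m where "\<bar>a m\<bar> < \<bar>a 0\<bar>" using small[of "\<bar>a 0\<bar>"] by auto
    then show False using const[of m] by simp
  qed
qed

lemma finite_support_summable:
  fixes f :: "'a \<Rightarrow> 'b::topological_comm_monoid_add"
  assumes "finite S" "\<And>k. k \<notin> S \<Longrightarrow> f k = 0"
  shows "f summable_on UNIV"
proof -
  have "f summable_on UNIV \<longleftrightarrow> f summable_on S"
    by (rule summable_on_cong_neutral) (use assms in auto)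
  then show ?thesis using assms(1) by simp
qed

lemma summable_finite_ge:
  fixes f :: "'a \<Rightarrow> real"
  assumes sum: "f summable_on UNIV" and nn: "\<And>k. f k \<ge> 0" and d: "\<delta> > 0"
  shows "finite {k. \<delta> \<le> f k}"
proof (rule ccontr)
  assume inf: "infinite {k. \<delta> \<le> f k}"
  define n where "n = nat (ceiling (infsum f UNIV / \<delta>)) + 1"
  obtain B where B: "finite B" "card B = n" "B \<subseteq> {k. \<delta> \<le> f k}"
    using infinite_arbitrarily_large[OF inf] by blast
  have "real n * \<delta> = (\<Sum>k\<in>B. \<delta>)" using B by simp
  also have "\<dots> \<le> sum f B" using B by (intro sum_mono) auto
  also have "\<dots> \<le> infsum f UNIV" by (rule finite_sum_le_infsum) (use sum B nn in auto)
  finally have "real n * \<delta> \<le> infsum f UNIV" .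
  moreover have "infsum f UNIV / \<delta> < real n" unfolding n_def by linarith
  ultimately show False using d by (simp add: field_simps)
qed

lemma lp_finite_ge:
  fixes r :: real
  assumes "r \<ge> 1" "x \<in> lp_space (ereal r)" "\<epsilon> > 0"
  shows "finite {k. \<epsilon> \<le> norm (x k)}"
proof -
  have s: "(\<lambda>k. norm (x k) powr r) summable_on UNIV" using assms by (simp add: lp_space_def)
  have "finite {k. \<epsilon> powr r \<le> norm (x k) powr r}"
    by (rule summable_finite_ge[OF s]) (use assms in auto)
  moreover have "{k. \<epsilon> \<le> norm (x k)} \<subseteq> {k. \<epsilon> powr r \<le> norm (x k) powr r}"
    using assms by (auto intro: powr_mono2)
  ultimately show ?thesis by (rule finite_subset[rotated])
qed

lemma lp_bounded:
  assumes "1 \<le> p" "x \<in> lp_space p"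
  shows "\<exists>B. \<forall>k. norm (x k) \<le> B"
proof (cases "p = \<infinity>")
  case True
  then have "bounded (range x)" using assms by (simp add: lp_space_def)
  then show ?thesis by (auto simp: bounded_iff)
next
  case False
  then obtain r where r: "p = ereal r" "r \<ge> 1" using assms by (cases p) auto
  have fin: "finite {k. 1 \<le> norm (x k)}" by (rule lp_finite_ge) (use assms r in auto)
  have "norm (x k) \<le> max 1 (Max ((\<lambda>k. norm (x k)) ` {k. 1 \<le> norm (x k)}))" for k
    using fin by (cases "1 \<le> norm (x k)") (auto intro: Max_ge le_max_iff_disj[THEN iffD2])
  then show ?thesis by blast
qed

lemma lp_space_delta:
  assumes "1 \<le> p"
  shows "(\<lambda>k. if k = 0 then 1 else 0) \<in> lp_space p"
proof (cases "p = \<infinity>")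
  case True
  have "bounded (range (\<lambda>k::int. if k = 0 then 1 else 0 :: complex))"
    unfolding bounded_iff by (rule exI[of _ 1]) auto
  then show ?thesis using True by (simp add: lp_space_def)
next
  case False
  then obtain r where r: "p = ereal r" using assms by (cases p) auto
  have "(\<lambda>k::int. norm (if k = 0 then 1 else 0 :: complex) powr r) summable_on UNIV"
    by (rule finite_support_summable[of "{0}"]) auto
  then show ?thesis using r False by (simp add: lp_space_def)
qed

lemma solution_agrees_right:
  fixes y :: "int \<Rightarrow> real"
  assumes u: "is_solution v u"
    and rec: "\<And>n. n \<ge> 1 \<Longrightarrow> y (n+1) + y (n-1) + real_of_int (v n) * y n = 0"
    and "u 0 = y 0" "u 1 = y 1" and "n \<ge> 0"
  shows "u n = y n"
proof -
  have "u n = y n \<and> u (n+1) = y (n+1)"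
    using \<open>n \<ge> 0\<close>
  proof (induction n rule: int_ge_induct)
    case (step i)
    have "y (i+2) = - y i - real_of_int (v (i+1)) * y (i+1)"
      using rec[of "i+1"] step(1) by (simp add: algebra_simps)
    then show ?case using step solution_next[OF u, of i] by (simp add: add.assoc)
  qed (use assms in simp)
  then show ?thesis by simp
qed

lemma solution_agrees_left:
  fixes y :: "int \<Rightarrow> real"
  assumes u: "is_solution v u"
    and rec: "\<And>n. n \<le> -1 \<Longrightarrow> y (n+1) + y (n-1) + real_of_int (v n) * y n = 0"
    and "u 0 = y 0" "u (-1) = y (-1)" and "n \<le> 0"
  shows "u n = y n"
proof -
  have "u n = y n \<and> u (n-1) = y (n-1)"
    using \<open>n \<le> 0\<close>
  proof (induction n rule: int_le_induct)
    case (step i)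
    have "y (i-1-1) = - y i - real_of_int (v (i-1)) * y (i-1)"
      using rec[of "i-1"] step(1) by (simp add: algebra_simps)
    moreover have "u (i-1-1) = - u i - real_of_int (v (i-1)) * u (i-1)"
      using solution_prev[OF u, of "i-1"] by simp
    ultimately show ?case using step by simp
  qed (use assms in simp)
  then show ?thesis by simp
qed

lemma complex_solution_agrees:
  fixes y :: "int \<Rightarrow> complex" and l :: complex
  assumes u: "is_solution v u"
    and rec: "\<And>i. a < i \<Longrightarrow> i < b \<Longrightarrow> y (i+1) + y (i-1) + of_int (v i) * y i = 0"
    and init: "y a = l * u a" "y (a+1) = l * u (a+1)"
    and k: "a \<le> k" "k \<le> b"
  shows "y k = l * u k"
proof -
  have step: "y i = l * u i \<and> y (i+1) = l * u (i+1)" if "a \<le> i" "i < b" for i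
    using that
  proof (induction i rule: int_ge_induct)
    case (step i)
    then have IH: "y i = l * u i" "y (i+1) = l * u (i+1)" by auto
    have "y (i + 1 + 1) + y (i + 1 - 1) + of_int (v (i+1)) * y (i+1) = 0" using rec[of "i+1"] step by simp
    then have "y (i + 2) = - y i - of_int (v (i+1)) * y (i+1)" by (simp add: add.assoc) algebra
    also have "\<dots> = l * complex_of_real (- u i - real_of_int (v (i+1)) * u (i+1))"
      unfolding IH by (simp add: algebra_simps)
    also have "\<dots> = l * u (i + 2)" using solution_next[OF u, of i] by simp
    finally show ?case using IH by (simp add: add.assoc)
  qed (use init in simp)
  show ?thesis
  proof (cases "k < b")
    case True
    then show ?thesis using step[OF k(1)] by simp
  next
    case False
    then show ?thesis using step[of "k - 1"] init k by (cases "k = a") auto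
  qed
qed

context periodic_potential
begin

text \<open>Sampling a solution along an arithmetic progression of step \<open>K\<close> gives a sequence
  with \<open>a (m + 2) = tr * a (m + 1) - a m\<close>.\<close>

lemma decaying_right_solution_zero:
  assumes u: "is_solution v u" and t: "\<bar>tr\<bar> \<le> 2"
    and dec: "\<And>\<epsilon>. \<epsilon> > 0 \<Longrightarrow> \<exists>N. \<forall>k\<ge>N. \<bar>u k\<bar> < \<epsilon>"
  shows "u n = 0"
proof -
  define a where "a m = u (n + int m * int K)" for m
  have rec: "a (Suc (Suc m)) = tr * a (Suc m) - a m" for m
    using solution_period_recurrence[OF u, of "n + int m * int K"] unfolding a_def
    by (simp add: algebra_simps)
  have "\<exists>m. \<bar>a m\<bar> < \<epsilon> \<and> \<bar>a (Suc m)\<bar> < \<epsilon>" if eps: "\<epsilon> > 0" for \<epsilon>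
  proof -
    obtain N where N: "\<forall>k\<ge>N. \<bar>u k\<bar> < \<epsilon>" using dec[OF eps] by blast
    define m where "m = nat (N - n)"
    have "int m * 1 \<le> int m * int K" using K1 by (intro mult_left_mono) auto
    moreover have "int m \<ge> N - n" by (simp add: m_def)
    ultimately have "n + int m * int K \<ge> N" by linarith
    moreover have "n + int (Suc m) * int K \<ge> N" using calculation K1 by (simp add: algebra_simps)
    ultimately show ?thesis unfolding a_def using N by blast
  qed
  from elliptic_recurrence_zero[OF rec t this] show ?thesis by (simp add: a_def)
qed

lemma decaying_left_solution_zero:
  assumes u: "is_solution v u" and t: "\<bar>tr\<bar> \<le> 2"
    and dec: "\<And>\<epsilon>. \<epsilon> > 0 \<Longrightarrow> \<exists>N. \<forall>k\<le>N. \<bar>u k\<bar> < \<epsilon>"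
  shows "u n = 0"
proof -
  define a where "a m = u (n - int m * int K)" for m
  have rec: "a (Suc (Suc m)) = tr * a (Suc m) - a m" for m
    using solution_period_recurrence[OF u, of "n - int (Suc (Suc m)) * int K"] unfolding a_def
    by (simp add: algebra_simps)
  have "\<exists>m. \<bar>a m\<bar> < \<epsilon> \<and> \<bar>a (Suc m)\<bar> < \<epsilon>" if eps: "\<epsilon> > 0" for \<epsilon>
  proof -
    obtain N where N: "\<forall>k\<le>N. \<bar>u k\<bar> < \<epsilon>" using dec[OF eps] by blast
    define m where "m = nat (n - N)"
    have "int m * 1 \<le> int m * int K" using K1 by (intro mult_left_mono) auto
    moreover have "int m \<ge> n - N" by (simp add: m_def)
    ultimately have "n - int m * int K \<le> N" by linarith
    moreover have "n - int (Suc m) * int K \<le> N" using calculation K1 by (simp add: algebra_simps)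
    ultimately show ?thesis unfolding a_def using N by blast
  qed
  from elliptic_recurrence_zero[OF rec t this] show ?thesis by (simp add: a_def)
qed

text \<open>A decaying solution of \<open>H y = 0\<close> away from the origin agrees with a genuine solution on
  either half-line, and both of these vanish.\<close>

lemma localized_solution_zero:
  fixes y :: "int \<Rightarrow> real"
  assumes t: "\<bar>tr\<bar> \<le> 2"
    and rec: "\<And>n. n \<noteq> 0 \<Longrightarrow> y (n+1) + y (n-1) + real_of_int (v n) * y n = 0"
    and fin: "\<And>\<epsilon>. \<epsilon> > 0 \<Longrightarrow> finite {k. \<epsilon> \<le> \<bar>y k\<bar>}"
  shows "y n = 0"
proof -
  obtain u where u: "is_solution v u" "u 1 = y 1" "u (1 - 1) = y (1 - 1)"
    using solution_exists by blast
  have uy: "k \<ge> 0 \<Longrightarrow> u k = y k" for k by (rule solution_agrees_right[OF u(1)]) (use rec u in auto)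
  obtain u' where u': "is_solution v u'" "u' 0 = y 0" "u' (0 - 1) = y (0 - 1)"
    using solution_exists by blast
  have uy': "k \<le> 0 \<Longrightarrow> u' k = y k" for k by (rule solution_agrees_left[OF u'(1)]) (use rec u' in auto)
  have far_small: "\<exists>N. \<forall>k. \<bar>k\<bar> > N \<longrightarrow> \<bar>y k\<bar> < \<epsilon>" if eps: "\<epsilon> > 0" for \<epsilon>
  proof -
    obtain N where "abs ` {k. \<epsilon> \<le> \<bar>y k\<bar>} \<subseteq> {..N}"
      using fin[OF eps] finite_int_iff_bounded_le by blast
    then show ?thesis by (auto simp: not_le[symmetric])
  qed
  have "u k = 0" for k
  proof (rule decaying_right_solution_zero[OF u(1) t])
    fix \<epsilon> :: real assume "\<epsilon> > 0"
    then obtain N where "\<forall>k. \<bar>k\<bar> > N \<longrightarrow> \<bar>y k\<bar> < \<epsilon>" using far_small by blast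
    then show "\<exists>N. \<forall>k\<ge>N. \<bar>u k\<bar> < \<epsilon>" using uy by (intro exI[of _ "\<bar>N\<bar> + 1"]) auto
  qed
  moreover have "u' k = 0" for k
  proof (rule decaying_left_solution_zero[OF u'(1) t])
    fix \<epsilon> :: real assume "\<epsilon> > 0"
    then obtain N where "\<forall>k. \<bar>k\<bar> > N \<longrightarrow> \<bar>y k\<bar> < \<epsilon>" using far_small by blast
    then show "\<exists>N. \<forall>k\<le>N. \<bar>u' k\<bar> < \<epsilon>" using uy' by (intro exI[of _ "- \<bar>N\<bar> - 1"]) auto
  qed
  ultimately show ?thesis using uy[of n] uy'[of n] by (cases "n \<ge> 0") auto
qed

lemma delta_notin_range_lp:
  assumes t: "\<bar>tr\<bar> \<le> 2" and r: "r \<ge> 1"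
  shows "(\<lambda>k. if k = 0 then 1 else 0) \<notin> schroedinger v ` lp_space (ereal r)"
proof
  define e0 where "e0 = (\<lambda>k::int. if k = 0 then 1 else 0 :: complex)"
  assume "e0 \<in> schroedinger v ` lp_space (ereal r)"
  then obtain x where x: "x \<in> lp_space (ereal r)" "schroedinger v x = e0" by blast
  have eq: "x (n+1) + x (n-1) + of_int (v n) * x n = e0 n" for n
    using fun_cong[OF x(2), of n] unfolding schroedinger_def by simp
  have recR: "Re (x (n+1)) + Re (x (n-1)) + real_of_int (v n) * Re (x n) = 0" if "n \<noteq> 0" for n
    using arg_cong[OF eq[of n], of Re] that by (simp add: e0_def)
  have recI: "Im (x (n+1)) + Im (x (n-1)) + real_of_int (v n) * Im (x n) = 0" if "n \<noteq> 0" for n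
    using arg_cong[OF eq[of n], of Im] that by (simp add: e0_def)
  have finx: "finite {k. \<epsilon> \<le> norm (x k)}" if "\<epsilon> > 0" for \<epsilon>
    by (rule lp_finite_ge[OF r x(1) that])
  have finR: "finite {k. \<epsilon> \<le> \<bar>Re (x k)\<bar>}" if "\<epsilon> > 0" for \<epsilon>
    by (rule finite_subset[OF _ finx[OF that]]) (auto intro: order_trans abs_Re_le_cmod)
  have finI: "finite {k. \<epsilon> \<le> \<bar>Im (x k)\<bar>}" if "\<epsilon> > 0" for \<epsilon>
    by (rule finite_subset[OF _ finx[OF that]]) (auto intro: order_trans abs_Im_le_cmod)
  have "Re (x n) = 0" for n by (rule localized_solution_zero[OF t recR finR])
  moreover have "Im (x n) = 0" for n by (rule localized_solution_zero[OF t recI finI])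
  ultimately have "x = (\<lambda>_. 0)" by (simp add: complex_eq_iff fun_eq_iff)
  then show False using eq[of 0] by (simp add: e0_def)
qed

text \<open>For \<open>|tr| < 2\<close> the invariant \<open>u (n + K)^2 - tr * u (n + K) * u n + u n^2\<close> is
  \<open>K\<close>-periodic, hence bounded, and it dominates a positive multiple of \<open>u n^2\<close>.\<close>

lemma elliptic_solution_bounded:
  assumes t: "\<bar>tr\<bar> < 2" and u: "is_solution v u"
  shows "\<exists>B. \<forall>n. \<bar>u n\<bar> \<le> B"
proof -
  define I where "I n = u (n + int K)^2 - tr * u (n + int K) * u n + (u n)^2" for n
  have rec: "u (n + int K + int K) = tr * u (n + int K) - u n" for n
    using solution_period_recurrence[OF u, of n] by (simp add: algebra_simps mult_2)
  have "I (n + int K) = I n" for n unfolding I_def rec by (simp add: power2_eq_square algebra_simps)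
  then obtain B where B: "\<And>n. \<bar>I n\<bar> \<le> B" using periodic_bounded[OF K1, of I] by blast
  have "\<bar>tr\<bar>^2 < 2^2" by (rule power_strict_mono) (use t in auto)
  then have c: "1 - tr^2/4 > 0" by simp
  have "(1 - tr^2/4) * (u n)^2 \<le> B" for n
  proof -
    have "I n = (u (n + int K) - tr/2 * u n)^2 + (1 - tr^2/4) * (u n)^2"
      unfolding I_def by (simp add: power2_eq_square algebra_simps)
    then show ?thesis using B[of n] abs_ge_self[of "I n"] zero_le_power2[of "u (n + int K) - tr/2 * u n"]
      by linarith
  qed
  then have "(u n)^2 \<le> B / (1 - tr^2/4)" for n
    using c by (simp add: pos_le_divide_eq mult.commute)
  then have "\<bar>u n\<bar> \<le> sqrt (B / (1 - tr^2/4))" for n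
    using real_sqrt_le_mono real_sqrt_abs by metis
  then show ?thesis by blast
qed

lemma parabolic_solution_exists:
  assumes t: "\<bar>tr\<bar> = 2"
  shows "\<exists>w. is_solution v w \<and> w \<noteq> (\<lambda>_. 0) \<and> (\<forall>n. w (n + int K) = tr/2 * w n)"
proof -
  define u where "u = fund_c v"
  have u: "is_solution v u" unfolding u_def by (rule fund_c_solution)
  have u_nz: "u \<noteq> (\<lambda>_. 0)" using fund_c_0[of v] unfolding u_def by (metis one_neq_zero)
  have tr2: "tr^2 = 4" using t power2_abs[of tr] by simp
  define w where "w n = 1 * u (n + int K) + (- tr/2) * u n" for n
  have w: "is_solution v w" unfolding w_def by (rule solution_lincomb[OF solution_shift_period[OF u] u])
  have wK: "w (n + int K) = tr/2 * w n" for n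
  proof -
    have "u (n + int K + int K) = tr * u (n + int K) - u n"
      using solution_period_recurrence[OF u, of n] by (simp add: algebra_simps mult_2)
    then have "w (n + int K) = tr/2 * u (n + int K) - u n" unfolding w_def by simp
    also have "\<dots> = tr/2 * u (n + int K) - (tr^2/4) * u n" using tr2 by simp
    also have "\<dots> = tr/2 * w n" unfolding w_def by (simp add: power2_eq_square algebra_simps)
    finally show ?thesis .
  qed
  show ?thesis
  proof (cases "w = (\<lambda>_. 0)")
    case True
    have "u (n + int K) = tr/2 * u n" for n
      using fun_cong[OF True, of n] unfolding w_def by (simp add: algebra_simps)
    then show ?thesis using u u_nz by (intro exI[of _ u]) simp
  next
    case False
    then show ?thesis using w wK by (intro exI[of _ w]) simp
  qed
qed

lemma bounded_solution_exists:
  assumes t: "\<bar>tr\<bar> \<le> 2"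
  shows "\<exists>w. is_solution v w \<and> w \<noteq> (\<lambda>_. 0) \<and> (\<exists>B. \<forall>n. \<bar>w n\<bar> \<le> B)"
proof (cases "\<bar>tr\<bar> < 2")
  case True
  have "fund_c v \<noteq> (\<lambda>_. 0)" using fund_c_0[of v] by (metis one_neq_zero)
  then show ?thesis using elliptic_solution_bounded[OF True fund_c_solution] fund_c_solution
    by (intro exI[of _ "fund_c v"]) simp
next
  case False
  with t have t2: "\<bar>tr\<bar> = 2" by simp
  then obtain w where w: "is_solution v w" "w \<noteq> (\<lambda>_. 0)" "\<And>n. w (n + int K) = tr/2 * w n"
    using parabolic_solution_exists by blast
  have "\<bar>w (n + int K)\<bar> = \<bar>w n\<bar>" for n using t2 unfolding w(3) by (simp add: abs_mult)
  then obtain B where "\<And>n. \<bar>\<bar>w n\<bar>\<bar> \<le> B" using periodic_bounded[OF K1, of "\<lambda>n. \<bar>w n\<bar>"] by blast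
  then show ?thesis using w(1,2) by (intro exI[of _ w]) auto
qed

lemma schroedinger_not_inj_linf:
  assumes t: "\<bar>tr\<bar> \<le> 2"
  shows "\<not> inj_on (schroedinger v) (lp_space \<infinity>)"
proof
  assume inj: "inj_on (schroedinger v) (lp_space \<infinity>)"
  obtain w B where w: "is_solution v w" "w \<noteq> (\<lambda>_. 0)" "\<forall>n. \<bar>w n\<bar> \<le> B"
    using bounded_solution_exists[OF t] by blast
  define x where "x n = complex_of_real (w n)" for n
  have "bounded (range x)" unfolding bounded_iff x_def using w(3) by auto
  then have x: "x \<in> lp_space \<infinity>" by (simp add: lp_space_def)
  have zero: "(\<lambda>_. 0) \<in> lp_space \<infinity>" by (simp add: lp_space_def)
  have "schroedinger v x = schroedinger v (\<lambda>_. 0)"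
  proof
    fix n
    have "complex_of_real (w (n+1) + w (n-1) + real_of_int (v n) * w n) = 0"
      using w(1) unfolding is_solution_def by simp
    then show "schroedinger v x n = schroedinger v (\<lambda>_. 0) n" unfolding schroedinger_def x_def by simp
  qed
  then have "x = (\<lambda>_. 0)" by (rule inj_onD[OF inj _ x zero])
  then show False using w(2) by (auto simp: x_def fun_eq_iff)
qed

lemma fsm_applicable_imp_hyperbolic:
  assumes p: "1 \<le> p" and f: "fsm_applicable p (schroedinger v)"
  shows "\<bar>tr\<bar> > 2"
proof (rule ccontr)
  assume "\<not> \<bar>tr\<bar> > 2"
  then have t: "\<bar>tr\<bar> \<le> 2" by simp
  have bij: "bij_betw (schroedinger v) (lp_space p) (lp_space p)"
    using f by (simp add: fsm_applicable_def lp_invertible_def)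
  show False
  proof (cases "p = \<infinity>")
    case True
    then show False using bij schroedinger_not_inj_linf[OF t] by (simp add: bij_betw_def)
  next
    case False
    then obtain r where r: "p = ereal r" "r \<ge> 1" using p by (cases p) auto
    have "(\<lambda>k. if k = 0 then 1 else 0) \<in> schroedinger v ` lp_space p"
      using bij lp_space_delta[OF p] unfolding bij_betw_def by simp
    then show False using delta_notin_range_lp[OF t r(2)] r(1) by simp
  qed
qed

end


section \<open>Kernel operators with exponential off-diagonal decay\<close>

lemma powr_convex_nonneg:
  assumes p: "p \<ge> (1::real)"
  shows "convex_on {0..} (\<lambda>x::real. x powr p)"
proof (rule convex_on_linorderI)
  show "convex {0::real..}" by simp
  fix t x y :: real
  assume t: "t > 0" "t < 1" and xy: "x \<in> {0..}" "y \<in> {0..}" "x < y"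
  show "((1 - t) *\<^sub>R x + t *\<^sub>R y) powr p \<le> (1 - t) * x powr p + t * y powr p"
  proof (cases "x = 0")
    case False
    then have "x \<in> {0<..}" "y \<in> {0<..}" using xy by auto
    then show ?thesis using convex_onD[OF powr_convex[OF p], of t x y] t by simp
  next
    case True
    have "(t * y) powr p = t powr p * y powr p" by (simp add: powr_mult)
    also have "\<dots> \<le> t * y powr p" by (rule mult_right_mono) (use t p powr_le_one_le in auto)
    finally show ?thesis using True p by simp
  qed
qed

lemma sum_powr_jensen:
  fixes a b :: "'i \<Rightarrow> real"
  assumes F: "finite F" and p: "p \<ge> 1" and a: "\<And>j. j \<in> F \<Longrightarrow> a j \<ge> 0" and b: "\<And>j. j \<in> F \<Longrightarrow> b j \<ge> 0"
  shows "(\<Sum>j\<in>F. a j * b j) powr p \<le> (\<Sum>j\<in>F. a j) powr (p - 1) * (\<Sum>j\<in>F. a j * b j powr p)"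
proof (cases "(\<Sum>j\<in>F. a j) = 0")
  case True
  then have "\<forall>j\<in>F. a j = 0" using sum_nonneg_eq_0_iff[OF F] a by blast
  then show ?thesis by simp
next
  case False
  define \<alpha> where "\<alpha> = (\<Sum>j\<in>F. a j)"
  have al: "\<alpha> > 0" using False a unfolding \<alpha>_def by (metis order_le_less sum_nonneg)
  have Fne: "F \<noteq> {}" using False by auto
  have "(\<Sum>j\<in>F. (a j / \<alpha>) *\<^sub>R b j) powr p \<le> (\<Sum>j\<in>F. (a j / \<alpha>) * b j powr p)"
  proof (rule convex_on_sum[OF F Fne powr_convex_nonneg[OF p]])
    show "(\<Sum>j\<in>F. a j / \<alpha>) = 1" using al unfolding \<alpha>_def by (simp add: sum_divide_distrib[symmetric])
  qed (use a b al in auto)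
  moreover have "(\<Sum>j\<in>F. (a j / \<alpha>) *\<^sub>R b j) = (\<Sum>j\<in>F. a j * b j) / \<alpha>"
    by (simp add: sum_divide_distrib)
  moreover have "(\<Sum>j\<in>F. (a j / \<alpha>) * b j powr p) = (\<Sum>j\<in>F. a j * b j powr p) / \<alpha>"
    by (simp add: sum_divide_distrib)
  ultimately have "((\<Sum>j\<in>F. a j * b j) / \<alpha>) powr p \<le> (\<Sum>j\<in>F. a j * b j powr p) / \<alpha>" by simp
  then have "(\<Sum>j\<in>F. a j * b j) powr p / \<alpha> powr p \<le> (\<Sum>j\<in>F. a j * b j powr p) / \<alpha>"
    by (simp add: powr_divide)
  then have "(\<Sum>j\<in>F. a j * b j) powr p \<le> \<alpha> powr p * ((\<Sum>j\<in>F. a j * b j powr p) / \<alpha>)"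
    using al by (simp add: divide_le_eq mult.commute)
  also have "\<alpha> powr p * ((\<Sum>j\<in>F. a j * b j powr p) / \<alpha>) = \<alpha> powr (p - 1) * (\<Sum>j\<in>F. a j * b j powr p)"
    using al by (simp add: powr_diff)
  finally show ?thesis unfolding \<alpha>_def .
qed

lemma infsum_powr_jensen:
  fixes a b :: "'a \<Rightarrow> real"
  assumes p: "p \<ge> 1" and a: "\<And>j. a j \<ge> 0" and b: "\<And>j. b j \<ge> 0" "\<And>j. b j \<le> Bb"
    and asum: "a summable_on UNIV" and R: "infsum a UNIV \<le> R"
    and absum: "(\<lambda>j. a j * b j powr p) summable_on UNIV"
  shows "(\<lambda>j. a j * b j) summable_on UNIV"
    "(infsum (\<lambda>j. a j * b j) UNIV) powr p \<le> R powr (p - 1) * infsum (\<lambda>j. a j * b j powr p) UNIV"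
proof -
  have "(\<lambda>j. a j * Bb) summable_on UNIV" using asum by (rule summable_on_cmult_left)
  then show ab: "(\<lambda>j. a j * b j) summable_on UNIV"
    by (rule summable_on_comparison_test) (use a b in \<open>auto intro: mult_left_mono mult_nonneg_nonneg\<close>)
  define T where "T = infsum (\<lambda>j. a j * b j powr p) UNIV"
  have R0: "R \<ge> 0" using R infsum_nonneg[of UNIV a] a by force
  have fin: "sum (\<lambda>j. a j * b j) F \<le> (R powr (p - 1) * T) powr (1 / p)" if F: "finite F" for F
  proof -
    have "(\<Sum>j\<in>F. a j * b j) powr p \<le> (\<Sum>j\<in>F. a j) powr (p - 1) * (\<Sum>j\<in>F. a j * b j powr p)"
      by (rule sum_powr_jensen[OF F p]) (use a b in auto)
    also have "\<dots> \<le> R powr (p - 1) * T"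
    proof (rule mult_mono)
      have "(\<Sum>j\<in>F. a j) \<le> infsum a UNIV" by (rule finite_sum_le_infsum) (use F asum a in auto)
      then show "(\<Sum>j\<in>F. a j) powr (p - 1) \<le> R powr (p - 1)"
        using R p by (intro powr_mono2) (auto intro: sum_nonneg a)
      show "(\<Sum>j\<in>F. a j * b j powr p) \<le> T" unfolding T_def
        by (rule finite_sum_le_infsum) (use F absum a b in auto)
    qed (use a b in \<open>auto intro: sum_nonneg\<close>)
    finally have h: "(\<Sum>j\<in>F. a j * b j) powr p \<le> R powr (p - 1) * T" .
    have nn: "(\<Sum>j\<in>F. a j * b j) \<ge> 0" using a b by (auto intro: sum_nonneg)
    have "(\<Sum>j\<in>F. a j * b j) = ((\<Sum>j\<in>F. a j * b j) powr p) powr (1 / p)"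
      using nn p by (simp add: powr_powr)
    also have "\<dots> \<le> (R powr (p - 1) * T) powr (1 / p)"
      by (rule powr_mono2) (use h p in auto)
    finally show ?thesis .
  qed
  have "infsum (\<lambda>j. a j * b j) UNIV \<le> (R powr (p - 1) * T) powr (1 / p)"
    by (rule infsum_le_finite_sums[OF ab]) (use fin in auto)
  moreover have "infsum (\<lambda>j. a j * b j) UNIV \<ge> 0" using a b by (auto intro: infsum_nonneg)
  ultimately have "(infsum (\<lambda>j. a j * b j) UNIV) powr p \<le> ((R powr (p - 1) * T) powr (1 / p)) powr p"
    using p by (intro powr_mono2) auto
  also have "\<dots> = R powr (p - 1) * T"
  proof -
    have "T \<ge> 0" unfolding T_def using a b by (auto intro: infsum_nonneg)
    then show ?thesis using p R0 by (simp add: powr_powr)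
  qed
  finally show "(infsum (\<lambda>j. a j * b j) UNIV) powr p \<le> R powr (p - 1) * infsum (\<lambda>j. a j * b j powr p) UNIV"
    unfolding T_def .
qed

lemma sum_power_inj_le:
  fixes s :: real and g :: "'a \<Rightarrow> nat"
  assumes s: "0 < s" "s < 1" and F: "finite F" and inj: "inj_on g F"
  shows "(\<Sum>j\<in>F. s ^ g j) \<le> 1 / (1 - s)"
proof -
  have "(\<Sum>j\<in>F. s ^ g j) = (\<Sum>k\<in>g ` F. s ^ k)" by (rule sum.reindex[OF inj, symmetric, unfolded comp_def])
  also have "\<dots> \<le> suminf (\<lambda>k. s ^ k)"
    by (rule sum_le_suminf) (use s F in auto)
  also have "\<dots> = 1 / (1 - s)" using s by (simp add: suminf_geometric)
  finally show ?thesis .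
qed

lemma two_sided_geometric:
  fixes s :: real
  assumes s: "0 < s" "s < 1"
  shows "(\<lambda>j::int. s powr \<bar>real_of_int i - real_of_int j\<bar>) summable_on UNIV"
    "infsum (\<lambda>j::int. s powr \<bar>real_of_int i - real_of_int j\<bar>) UNIV \<le> 2 / (1 - s)"
proof -
  have eq: "s powr \<bar>real_of_int i - real_of_int j\<bar> = s ^ nat \<bar>i - j\<bar>" for j
  proof -
    have "\<bar>real_of_int i - real_of_int j\<bar> = real (nat \<bar>i - j\<bar>)" by simp
    then have "s powr \<bar>real_of_int i - real_of_int j\<bar> = s powr real (nat \<bar>i - j\<bar>)" by simp
    also have "\<dots> = s ^ nat \<bar>i - j\<bar>" by (rule powr_realpow[OF s(1)])
    finally show ?thesis .
  qed
  have fin: "(\<Sum>j\<in>F. s powr \<bar>real_of_int i - real_of_int j\<bar>) \<le> 2 / (1 - s)" if F: "finite F" for F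
  proof -
    define F1 where "F1 = {j\<in>F. i \<le> j}"
    define F2 where "F2 = {j\<in>F. j < i}"
    have FF: "F = F1 \<union> F2" "F1 \<inter> F2 = {}" "finite F1" "finite F2" using F by (auto simp: F1_def F2_def)
    have "(\<Sum>j\<in>F. s powr \<bar>real_of_int i - real_of_int j\<bar>) = (\<Sum>j\<in>F. s ^ nat \<bar>i - j\<bar>)" by (simp add: eq)
    also have "\<dots> = (\<Sum>j\<in>F1. s ^ nat \<bar>i - j\<bar>) + (\<Sum>j\<in>F2. s ^ nat \<bar>i - j\<bar>)"
      using FF by (simp add: sum.union_disjoint)
    also have "(\<Sum>j\<in>F1. s ^ nat \<bar>i - j\<bar>) = (\<Sum>j\<in>F1. s ^ nat (j - i))"
      by (rule sum.cong) (auto simp: F1_def)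
    also have "(\<Sum>j\<in>F2. s ^ nat \<bar>i - j\<bar>) = (\<Sum>j\<in>F2. s ^ nat (i - j))"
      by (rule sum.cong) (auto simp: F2_def)
    also have "(\<Sum>j\<in>F1. s ^ nat (j - i)) \<le> 1 / (1 - s)"
      by (rule sum_power_inj_le[OF s FF(3)]) (auto simp: inj_on_def F1_def)
    also have "(\<Sum>j\<in>F2. s ^ nat (i - j)) \<le> 1 / (1 - s)"
      by (rule sum_power_inj_le[OF s FF(4)]) (auto simp: inj_on_def F2_def)
    finally show ?thesis by simp
  qed
  show sm: "(\<lambda>j::int. s powr \<bar>real_of_int i - real_of_int j\<bar>) summable_on UNIV"
    by (rule nonneg_bdd_above_summable_on) (use fin in \<open>auto intro!: bdd_aboveI2\<close>)
  show "infsum (\<lambda>j::int. s powr \<bar>real_of_int i - real_of_int j\<bar>) UNIV \<le> 2 / (1 - s)"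
    by (rule infsum_le_finite_sums[OF sm]) (use fin in auto)
qed

lemma infsum_finite_sum:
  fixes f :: "'i \<Rightarrow> 'j \<Rightarrow> real"
  assumes I: "finite I" and sm: "\<And>i. i \<in> I \<Longrightarrow> f i summable_on A"
  shows "(\<lambda>j. \<Sum>i\<in>I. f i j) summable_on A \<and> infsum (\<lambda>j. \<Sum>i\<in>I. f i j) A = (\<Sum>i\<in>I. infsum (f i) A)"
  using I sm
proof (induction I rule: finite_induct)
  case empty then show ?case by simp
next
  case (insert x I)
  then have IH: "(\<lambda>j. \<Sum>i\<in>I. f i j) summable_on A" "infsum (\<lambda>j. \<Sum>i\<in>I. f i j) A = (\<Sum>i\<in>I. infsum (f i) A)" by auto
  have fx: "f x summable_on A" using insert by auto
  show ?case using insert IH fx by (simp add: summable_on_add infsum_add)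
qed

definition kernel_op :: "(int \<Rightarrow> int \<Rightarrow> real) \<Rightarrow> (int \<Rightarrow> complex) \<Rightarrow> int \<Rightarrow> complex" where
  "kernel_op k x i = (\<Sum>\<^sub>\<infinity>j. complex_of_real (k i j) * x j)"

definition exp_kernel :: "real \<Rightarrow> real \<Rightarrow> (int \<Rightarrow> int \<Rightarrow> real) \<Rightarrow> bool" where
  "exp_kernel A s k \<longleftrightarrow> 0 < s \<and> s < 1 \<and> A \<ge> 0 \<and> (\<forall>i j. \<bar>k i j\<bar> \<le> A * s powr \<bar>real_of_int i - real_of_int j\<bar>)"

lemma exp_kernel_row:
  assumes kb: "exp_kernel A s k"
  shows "(\<lambda>j. \<bar>k i j\<bar>) summable_on UNIV" "infsum (\<lambda>j. \<bar>k i j\<bar>) UNIV \<le> A * (2 / (1 - s))"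
proof -
  have s: "0 < s" "s < 1" "A \<ge> 0" and k: "\<And>i j. \<bar>k i j\<bar> \<le> A * s powr \<bar>real_of_int i - real_of_int j\<bar>"
    using kb unfolding exp_kernel_def by auto
  have g: "(\<lambda>j. A * s powr \<bar>real_of_int i - real_of_int j\<bar>) summable_on UNIV"
    by (rule summable_on_cmult_right[OF two_sided_geometric(1)[OF s(1,2)]])
  show sm: "(\<lambda>j. \<bar>k i j\<bar>) summable_on UNIV"
    by (rule summable_on_comparison_test[OF g]) (use k in auto)
  have "infsum (\<lambda>j. \<bar>k i j\<bar>) UNIV \<le> infsum (\<lambda>j. A * s powr \<bar>real_of_int i - real_of_int j\<bar>) UNIV"
    by (rule infsum_mono[OF sm g]) (use k in auto)
  also have "\<dots> = A * infsum (\<lambda>j. s powr \<bar>real_of_int i - real_of_int j\<bar>) UNIV" by (rule infsum_cmult_right')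
  also have "\<dots> \<le> A * (2 / (1 - s))" by (rule mult_left_mono[OF two_sided_geometric(2)[OF s(1,2)] s(3)])
  finally show "infsum (\<lambda>j. \<bar>k i j\<bar>) UNIV \<le> A * (2 / (1 - s))" .
qed

lemma exp_kernel_col:
  assumes kb: "exp_kernel A s k" and F: "finite F"
  shows "(\<Sum>i\<in>F. \<bar>k i j\<bar>) \<le> A * (2 / (1 - s))"
proof -
  have s: "0 < s" "s < 1" "A \<ge> 0" and k: "\<And>i j. \<bar>k i j\<bar> \<le> A * s powr \<bar>real_of_int i - real_of_int j\<bar>"
    using kb unfolding exp_kernel_def by auto
  have "(\<Sum>i\<in>F. \<bar>k i j\<bar>) \<le> (\<Sum>i\<in>F. A * s powr \<bar>real_of_int j - real_of_int i\<bar>)"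
    by (rule sum_mono) (use k in \<open>simp add: abs_minus_commute\<close>)
  also have "\<dots> = A * (\<Sum>i\<in>F. s powr \<bar>real_of_int j - real_of_int i\<bar>)" by (simp add: sum_distrib_left)
  also have "(\<Sum>i\<in>F. s powr \<bar>real_of_int j - real_of_int i\<bar>) \<le> infsum (\<lambda>i. s powr \<bar>real_of_int j - real_of_int i\<bar>) UNIV"
    by (rule finite_sum_le_infsum[OF two_sided_geometric(1)[OF s(1,2)] F]) auto
  also have "\<dots> \<le> 2 / (1 - s)" by (rule two_sided_geometric(2)[OF s(1,2)])
  finally show ?thesis using s by (simp add: mult_left_mono)
qed

lemma kernel_op_summable:
  assumes kb: "exp_kernel A s k" and xb: "\<And>j. norm (x j) \<le> Bx"
  shows "(\<lambda>j. complex_of_real (k i j) * x j) summable_on UNIV"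
    "(\<lambda>j. \<bar>k i j\<bar> * norm (x j)) summable_on UNIV"
    "norm (kernel_op k x i) \<le> infsum (\<lambda>j. \<bar>k i j\<bar> * norm (x j)) UNIV"
proof -
  have r: "(\<lambda>j. \<bar>k i j\<bar>) summable_on UNIV" by (rule exp_kernel_row[OF kb])
  have r2: "(\<lambda>j. \<bar>k i j\<bar> * Bx) summable_on UNIV" by (rule summable_on_cmult_left[OF r])
  show s2: "(\<lambda>j. \<bar>k i j\<bar> * norm (x j)) summable_on UNIV"
    by (rule summable_on_comparison_test[OF r2]) (use xb in \<open>auto intro: mult_left_mono\<close>)
  have abs: "(\<lambda>j. norm (complex_of_real (k i j) * x j)) summable_on UNIV"
    using s2 by (simp add: norm_mult)
  then show "(\<lambda>j. complex_of_real (k i j) * x j) summable_on UNIV" by (rule abs_summable_summable)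
  have "norm (kernel_op k x i) \<le> infsum (\<lambda>j. norm (complex_of_real (k i j) * x j)) UNIV"
    unfolding kernel_op_def by (rule norm_infsum_bound[OF abs])
  then show "norm (kernel_op k x i) \<le> infsum (\<lambda>j. \<bar>k i j\<bar> * norm (x j)) UNIV" by (simp add: norm_mult)
qed

text \<open>Schur's test, with the row sums of \<open>|k|\<close> bounded through \<open>exp_kernel\<close> and the column sums
  bounded by the weights \<open>c\<close>.\<close>

lemma kernel_op_lp_estimate:
  fixes p :: real
  assumes p: "p \<ge> 1" and kb: "exp_kernel A s k" and xb: "\<And>j. norm (x j) \<le> Bx"
    and col: "\<And>j F. finite F \<Longrightarrow> (\<Sum>i\<in>F. \<bar>k i j\<bar>) \<le> c j"
    and cs: "(\<lambda>j. c j * norm (x j) powr p) summable_on UNIV"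
  shows "(\<lambda>i. norm (kernel_op k x i) powr p) summable_on UNIV"
    "infsum (\<lambda>i. norm (kernel_op k x i) powr p) UNIV \<le> (A * (2 / (1 - s))) powr (p - 1) * infsum (\<lambda>j. c j * norm (x j) powr p) UNIV"
proof -
  define R where "R = A * (2 / (1 - s))"
  have s: "0 < s" "s < 1" "A \<ge> 0" and k: "\<And>i j. \<bar>k i j\<bar> \<le> A * s powr \<bar>real_of_int i - real_of_int j\<bar>"
    using kb unfolding exp_kernel_def by auto
  have Bx0: "Bx \<ge> 0" using xb[of 0] norm_ge_zero order_trans by blast
  have absum: "(\<lambda>j. \<bar>k i j\<bar> * norm (x j) powr p) summable_on UNIV" for i
  proof -
    have "(\<lambda>j. \<bar>k i j\<bar> * Bx powr p) summable_on UNIV" by (rule summable_on_cmult_left[OF exp_kernel_row(1)[OF kb]])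
    then show ?thesis
      by (rule summable_on_comparison_test) (use xb p in \<open>auto intro!: mult_left_mono powr_mono2\<close>)
  qed
  have pw: "norm (kernel_op k x i) powr p \<le> R powr (p - 1) * infsum (\<lambda>j. \<bar>k i j\<bar> * norm (x j) powr p) UNIV" for i
  proof -
    have J: "(infsum (\<lambda>j. \<bar>k i j\<bar> * norm (x j)) UNIV) powr p \<le> R powr (p - 1) * infsum (\<lambda>j. \<bar>k i j\<bar> * norm (x j) powr p) UNIV"
      unfolding R_def by (rule infsum_powr_jensen(2)[OF p _ _ xb exp_kernel_row[OF kb] absum]) auto
    have "norm (kernel_op k x i) powr p \<le> (infsum (\<lambda>j. \<bar>k i j\<bar> * norm (x j)) UNIV) powr p"
      using kernel_op_summable(3)[OF kb xb, where i=i] p by (intro powr_mono2) auto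
    then show ?thesis using J by linarith
  qed
  define T where "T = infsum (\<lambda>j. c j * norm (x j) powr p) UNIV"
  have fin: "(\<Sum>i\<in>I. norm (kernel_op k x i) powr p) \<le> R powr (p - 1) * T" if I: "finite I" for I
  proof -
    have "(\<Sum>i\<in>I. norm (kernel_op k x i) powr p) \<le> (\<Sum>i\<in>I. R powr (p - 1) * infsum (\<lambda>j. \<bar>k i j\<bar> * norm (x j) powr p) UNIV)"
      by (rule sum_mono[OF pw])
    also have "\<dots> = R powr (p - 1) * (\<Sum>i\<in>I. infsum (\<lambda>j. \<bar>k i j\<bar> * norm (x j) powr p) UNIV)"
      by (simp add: sum_distrib_left)
    also have "(\<Sum>i\<in>I. infsum (\<lambda>j. \<bar>k i j\<bar> * norm (x j) powr p) UNIV) = infsum (\<lambda>j. \<Sum>i\<in>I. \<bar>k i j\<bar> * norm (x j) powr p) UNIV"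
      using infsum_finite_sum[OF I, of "\<lambda>i j. \<bar>k i j\<bar> * norm (x j) powr p" UNIV] absum by simp
    also have "\<dots> \<le> T" unfolding T_def
    proof (rule infsum_mono)
      show "(\<lambda>j. \<Sum>i\<in>I. \<bar>k i j\<bar> * norm (x j) powr p) summable_on UNIV"
        using infsum_finite_sum[OF I, of "\<lambda>i j. \<bar>k i j\<bar> * norm (x j) powr p" UNIV] absum by simp
      show "(\<lambda>j. c j * norm (x j) powr p) summable_on UNIV" by (rule cs)
      fix j
      have "(\<Sum>i\<in>I. \<bar>k i j\<bar> * norm (x j) powr p) = (\<Sum>i\<in>I. \<bar>k i j\<bar>) * norm (x j) powr p" by (simp add: sum_distrib_right)
      also have "\<dots> \<le> c j * norm (x j) powr p" by (rule mult_right_mono[OF col[OF I]]) simp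
      finally show "(\<Sum>i\<in>I. \<bar>k i j\<bar> * norm (x j) powr p) \<le> c j * norm (x j) powr p" .
    qed
    finally show ?thesis by (simp add: mult_left_mono)
  qed
  show sm: "(\<lambda>i. norm (kernel_op k x i) powr p) summable_on UNIV"
    by (rule nonneg_bdd_above_summable_on) (use fin in \<open>auto intro!: bdd_aboveI2\<close>)
  show "infsum (\<lambda>i. norm (kernel_op k x i) powr p) UNIV \<le> (A * (2 / (1 - s))) powr (p - 1) * infsum (\<lambda>j. c j * norm (x j) powr p) UNIV"
    using infsum_le_finite_sums[OF sm fin] unfolding R_def T_def by simp
qed

lemma linf_norm_ge:
  assumes "x \<in> lp_space \<infinity>"
  shows "bdd_above (range (\<lambda>k. norm (x k)))" "\<And>j. norm (x j) \<le> lp_norm \<infinity> x"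
proof -
  have b: "bounded (range x)" using assms by (simp add: lp_space_def)
  have "bounded ((\<lambda>k. norm (x k)) ` UNIV)" using b bounded_norm_comp[of x UNIV] by simp
  then show bd: "bdd_above (range (\<lambda>k. norm (x k)))" by (rule bounded_imp_bdd_above)
  fix j show "norm (x j) \<le> lp_norm \<infinity> x"
    unfolding lp_norm_def by (simp add: cSUP_upper[OF _ bd])
qed

lemma linf_norm_le:
  assumes "\<And>i. norm (z i) \<le> M"
  shows "lp_norm \<infinity> z \<le> M"
  unfolding lp_norm_def using assms by (simp add: cSUP_least)

lemma kernel_op_linf:
  assumes kb: "exp_kernel A s k" and x: "x \<in> lp_space \<infinity>"
  shows "kernel_op k x \<in> lp_space \<infinity>" "lp_norm \<infinity> (kernel_op k x) \<le> A * (2 / (1 - s)) * lp_norm \<infinity> x"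
proof -
  define R where "R = A * (2 / (1 - s))"
  define X where "X = lp_norm \<infinity> x"
  have xX: "norm (x j) \<le> X" for j unfolding X_def by (rule linf_norm_ge(2)[OF x])
  have bound: "norm (kernel_op k x i) \<le> R * X" for i
  proof -
    have "norm (kernel_op k x i) \<le> infsum (\<lambda>j. \<bar>k i j\<bar> * norm (x j)) UNIV"
      by (rule kernel_op_summable(3)[OF kb xX])
    also have "\<dots> \<le> infsum (\<lambda>j. \<bar>k i j\<bar> * X) UNIV"
      by (rule infsum_mono[OF kernel_op_summable(2)[OF kb xX] summable_on_cmult_left[OF exp_kernel_row(1)[OF kb]]])
         (use xX in \<open>auto intro: mult_left_mono\<close>)
    also have "\<dots> = infsum (\<lambda>j. \<bar>k i j\<bar>) UNIV * X" by (rule infsum_cmult_left')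
    also have "\<dots> \<le> R * X"
      unfolding R_def using exp_kernel_row(2)[OF kb] order_trans[OF norm_ge_zero xX[of 0]]
      by (intro mult_right_mono) auto
    finally show ?thesis .
  qed
  then have "bounded (range (kernel_op k x))" unfolding bounded_iff by blast
  then show "kernel_op k x \<in> lp_space \<infinity>" by (simp add: lp_space_def)
  show "lp_norm \<infinity> (kernel_op k x) \<le> A * (2 / (1 - s)) * lp_norm \<infinity> x"
    using linf_norm_le[OF bound] unfolding R_def X_def .
qed

lemma kernel_op_lp_finite:
  assumes r: "r \<ge> 1" and kb: "exp_kernel A s k" and x: "x \<in> lp_space (ereal r)"
  shows "kernel_op k x \<in> lp_space (ereal r)"
    "lp_norm (ereal r) (kernel_op k x) \<le> A * (2 / (1 - s)) * lp_norm (ereal r) x"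
proof -
  define R where "R = A * (2 / (1 - s))"
  have R0: "R \<ge> 0" unfolding R_def using kb unfolding exp_kernel_def by simp
  obtain Bx where Bx: "\<And>j. norm (x j) \<le> Bx" using lp_bounded[of "ereal r" x] r x by auto
  have xs: "(\<lambda>j. norm (x j) powr r) summable_on UNIV" using x by (simp add: lp_space_def)
  have col: "\<And>j F. finite F \<Longrightarrow> (\<Sum>i\<in>F. \<bar>k i j\<bar>) \<le> R" unfolding R_def by (rule exp_kernel_col[OF kb])
  note estimate = kernel_op_lp_estimate[OF r kb Bx col summable_on_cmult_right[OF xs]]
  then show "kernel_op k x \<in> lp_space (ereal r)" by (simp add: lp_space_def)
  define Y where "Y = infsum (\<lambda>j. norm (x j) powr r) UNIV"
  have Y0: "Y \<ge> 0" unfolding Y_def by (rule infsum_nonneg) simp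
  have "infsum (\<lambda>i. norm (kernel_op k x i) powr r) UNIV \<le> R powr (r - 1) * (R * Y)"
    using estimate(2) unfolding R_def[symmetric] Y_def infsum_cmult_right' .
  also have "R powr (r - 1) * (R * Y) = R powr r * Y"
    using R0 r by (cases "R = 0") (simp_all add: powr_diff field_simps)
  finally have le: "infsum (\<lambda>i. norm (kernel_op k x i) powr r) UNIV \<le> R powr r * Y" .
  have "lp_norm (ereal r) (kernel_op k x) = (infsum (\<lambda>i. norm (kernel_op k x i) powr r) UNIV) powr (1 / r)"
    by (simp add: lp_norm_def)
  also have "\<dots> \<le> (R powr r * Y) powr (1 / r)"
    by (rule powr_mono2) (use le r in \<open>auto intro: infsum_nonneg\<close>)
  also have "\<dots> = R * Y powr (1 / r)" using R0 r Y0 by (simp add: powr_mult powr_powr)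
  finally show "lp_norm (ereal r) (kernel_op k x) \<le> A * (2 / (1 - s)) * lp_norm (ereal r) x"
    by (simp add: lp_norm_def Y_def R_def)
qed

lemma kernel_op_lp:
  assumes p: "1 \<le> p" and kb: "exp_kernel A s k" and x: "x \<in> lp_space p"
  shows "kernel_op k x \<in> lp_space p" "lp_norm p (kernel_op k x) \<le> A * (2 / (1 - s)) * lp_norm p x"
proof (atomize (full), cases "p = \<infinity>")
  case False
  then obtain r where "p = ereal r" "r \<ge> 1" using p by (cases p) auto
  then show "kernel_op k x \<in> lp_space p \<and> lp_norm p (kernel_op k x) \<le> A * (2 / (1 - s)) * lp_norm p x"
    using kernel_op_lp_finite[OF _ kb] x by simp
qed (use kernel_op_linf[OF kb] x in simp)

lemma infsum_delta:
  fixes x :: "int \<Rightarrow> complex"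
  shows "(\<Sum>\<^sub>\<infinity>j. complex_of_real (if n = j then 1 else 0) * x j) = x n"
proof -
  have "(\<Sum>\<^sub>\<infinity>j. complex_of_real (if n = j then 1 else 0) * x j) = (\<Sum>\<^sub>\<infinity>j\<in>{n}. complex_of_real (if n = j then 1 else 0) * x j)"
    by (rule infsum_cong_neutral) auto
  then show ?thesis by simp
qed

lemma le_geometric_imp_zero:
  fixes w K rho :: real
  assumes "0 < rho" "rho < 1" "\<And>n. \<bar>w\<bar> \<le> K * rho ^ n"
  shows "w = 0"
proof (rule ccontr)
  assume "w \<noteq> 0"
  have "(\<lambda>n. K * rho ^ n) \<longlonglongrightarrow> K * 0" by (intro tendsto_mult tendsto_const LIMSEQ_realpow_zero) (use assms in auto)
  then have "\<forall>\<^sub>F n in sequentially. K * rho ^ n < \<bar>w\<bar>" using \<open>w \<noteq> 0\<close> by (intro order_tendstoD(2)) auto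
  then obtain n where "K * rho ^ n < \<bar>w\<bar>" by (auto simp: eventually_sequentially)
  then show False using assms(3)[of n] by simp
qed

lemma kernel_op_diff:
  assumes k1: "exp_kernel A1 s1 k1" and k2: "exp_kernel A2 s2 k2" and xb: "\<And>j. norm (x j) \<le> Bx"
  shows "kernel_op k1 x i - kernel_op k2 x i = kernel_op (\<lambda>i j. k1 i j - k2 i j) x i"
proof -
  have a: "(\<lambda>j. complex_of_real (k1 i j) * x j) summable_on UNIV" by (rule kernel_op_summable(1)[OF k1 xb])
  have b: "(\<lambda>j. - (complex_of_real (k2 i j) * x j)) summable_on UNIV"
    using kernel_op_summable(1)[OF k2 xb, of i] by (simp add: summable_on_uminus)
  have "kernel_op k1 x i - kernel_op k2 x i = kernel_op k1 x i + (\<Sum>\<^sub>\<infinity>j. - (complex_of_real (k2 i j) * x j))"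
    unfolding kernel_op_def by (simp add: infsum_uminus)
  also have "\<dots> = (\<Sum>\<^sub>\<infinity>j. complex_of_real (k1 i j) * x j + - (complex_of_real (k2 i j) * x j))"
    unfolding kernel_op_def by (rule infsum_add[OF a b, symmetric])
  also have "\<dots> = kernel_op (\<lambda>i j. k1 i j - k2 i j) x i" unfolding kernel_op_def by (simp add: algebra_simps)
  finally show ?thesis .
qed

lemma kernel_op_pointwise_bound:
  assumes kb: "exp_kernel A s k" and xb: "\<And>j. norm (x j) \<le> Bx"
    and pt: "\<And>j. \<bar>k i j\<bar> * norm (x j) \<le> A' * s powr \<bar>real_of_int i - real_of_int j\<bar>" and A': "A' \<ge> 0"
  shows "norm (kernel_op k x i) \<le> A' * (2 / (1 - s))"
proof -
  have s: "0 < s" "s < 1" using kb unfolding exp_kernel_def by auto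
  have g: "(\<lambda>j. A' * s powr \<bar>real_of_int i - real_of_int j\<bar>) summable_on UNIV"
    by (rule summable_on_cmult_right[OF two_sided_geometric(1)[OF s]])
  have "norm (kernel_op k x i) \<le> infsum (\<lambda>j. \<bar>k i j\<bar> * norm (x j)) UNIV" by (rule kernel_op_summable(3)[OF kb xb])
  also have "\<dots> \<le> infsum (\<lambda>j. A' * s powr \<bar>real_of_int i - real_of_int j\<bar>) UNIV"
    by (rule infsum_mono[OF kernel_op_summable(2)[OF kb xb] g pt])
  also have "\<dots> = A' * infsum (\<lambda>j. s powr \<bar>real_of_int i - real_of_int j\<bar>) UNIV" by (rule infsum_cmult_right')
  also have "\<dots> \<le> A' * (2 / (1 - s))" by (rule mult_left_mono[OF two_sided_geometric(2)[OF s] A'])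
  finally show ?thesis .
qed

lemma infsum_weighted_tendsto_zero:
  fixes y :: "'a \<Rightarrow> real" and w :: "nat \<Rightarrow> 'a \<Rightarrow> real"
  assumes y0: "\<And>j. y j \<ge> 0" and ys: "y summable_on UNIV"
    and w0: "\<And>n j. 0 \<le> w n j" and w1: "\<And>n j. w n j \<le> 1" and lim: "\<And>j. (\<lambda>n. w n j) \<longlonglongrightarrow> 0"
  shows "(\<lambda>n. \<Sum>\<^sub>\<infinity>j. w n j * y j) \<longlonglongrightarrow> 0"
proof (rule order_tendstoI)
  have ws: "(\<lambda>j. w n j * y j) summable_on UNIV" for n
    by (rule summable_on_comparison_test[OF ys]) (use y0 w0 w1 in \<open>auto intro: mult_left_le_one_le\<close>)
  fix a :: real
  have "(\<Sum>\<^sub>\<infinity>j. w n j * y j) \<ge> 0" for n by (rule infsum_nonneg) (use y0 w0 in simp)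
  then show "a < 0 \<Longrightarrow> \<forall>\<^sub>F n in sequentially. a < (\<Sum>\<^sub>\<infinity>j. w n j * y j)"
    by (intro always_eventually allI) (meson less_le_trans)
  assume a: "a > 0"
  define Y where "Y = infsum y UNIV"
  have Y0: "Y \<ge> 0" unfolding Y_def by (rule infsum_nonneg) (use y0 in auto)
  obtain F where F: "finite F" "dist (sum y F) Y \<le> a / 3"
    using infsum_finite_approximation[OF ys, of "a/3"] a unfolding Y_def by auto
  define yN where "yN j = (if j \<in> F then 0 else y j)" for j
  have yNs: "yN summable_on UNIV"
    by (rule summable_on_comparison_test[OF ys]) (use y0 in \<open>auto simp: yN_def\<close>)
  have "Y = infsum (\<lambda>j. (if j \<in> F then y j else 0) + yN j) UNIV"
    unfolding Y_def by (rule arg_cong[where f="\<lambda>f. infsum f UNIV"]) (auto simp: yN_def)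
  also have "\<dots> = sum y F + infsum yN UNIV"
  proof -
    have "infsum (\<lambda>j. if j \<in> F then y j else 0) UNIV = sum y F"
      using F(1) by (subst infsum_cong_neutral[where T=F]) auto
    then show ?thesis using F(1) yNs by (subst infsum_add) (auto intro: finite_support_summable[of F])
  qed
  finally have tail: "infsum yN UNIV \<le> a / 3" using F(2) by (simp add: dist_real_def)
  define \<delta> where "\<delta> = a / (3 * (Y + 1))"
  have \<delta>: "\<delta> > 0" "\<delta> * Y \<le> a / 3" unfolding \<delta>_def using a Y0 by (simp_all add: field_simps)
  have "\<forall>\<^sub>F n in sequentially. \<forall>j\<in>F. w n j < \<delta>"
    using F(1) order_tendstoD(2)[OF lim \<delta>(1)] by (intro eventually_ball_finite) auto
  then show "\<forall>\<^sub>F n in sequentially. (\<Sum>\<^sub>\<infinity>j. w n j * y j) < a"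
  proof (rule eventually_mono)
    fix n assume small: "\<forall>j\<in>F. w n j < \<delta>"
    have "w n j * y j \<le> \<delta> * y j + yN j" for j
    proof (cases "j \<in> F")
      case True
      then have "w n j \<le> \<delta>" using small by auto
      then show ?thesis using True y0[of j] by (simp add: yN_def mult_right_mono)
    next
      case False
      have "w n j * y j \<le> y j" using y0[of j] w0[of n j] w1[of n j] by (rule mult_left_le_one_le)
      moreover have "0 \<le> \<delta> * y j" using \<delta>(1) y0[of j] by simp
      ultimately show ?thesis using False by (simp add: yN_def)
    qed
    then have "(\<Sum>\<^sub>\<infinity>j. w n j * y j) \<le> (\<Sum>\<^sub>\<infinity>j. \<delta> * y j + yN j)"
      by (intro infsum_mono ws summable_on_add summable_on_cmult_right ys yNs)
    also have "\<dots> = \<delta> * Y + infsum yN UNIV"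
      unfolding Y_def by (simp add: infsum_add summable_on_cmult_right ys yNs infsum_cmult_right')
    also have "\<dots> < a" using \<delta>(2) tail a by linarith
    finally show "(\<Sum>\<^sub>\<infinity>j. w n j * y j) < a" .
  qed
qed

context periodic_potential
begin

definition schroedinger_kernel :: "int \<Rightarrow> int \<Rightarrow> real" where
  "schroedinger_kernel i j =
     (if j = i + 1 then 1 else 0) + (if j = i - 1 then 1 else 0) + (if j = i then real_of_int (v i) else 0)"

lemma schroedinger_kernel_op: "schroedinger v x = kernel_op schroedinger_kernel x"
proof
  fix i
  have "kernel_op schroedinger_kernel x i = (\<Sum>\<^sub>\<infinity>j\<in>{i-1, i, i+1}. complex_of_real (schroedinger_kernel i j) * x j)"
    unfolding kernel_op_def by (rule infsum_cong_neutral) (auto simp: schroedinger_kernel_def)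
  also have "\<dots> = (\<Sum>j\<in>{i-1, i, i+1}. complex_of_real (schroedinger_kernel i j) * x j)" by simp
  also have "\<dots> = x (i+1) + x (i-1) + of_int (v i) * x i" by (simp add: schroedinger_kernel_def)
  finally show "schroedinger v x i = kernel_op schroedinger_kernel x i" unfolding schroedinger_def by simp
qed

lemma schroedinger_exp_kernel: "\<exists>A. exp_kernel A (1/2) schroedinger_kernel"
proof -
  obtain V where V: "\<And>n. \<bar>real_of_int (v n)\<bar> \<le> V"
    using periodic_bounded[OF K1, of "\<lambda>n. real_of_int (v n)"] per by auto
  have V0: "V \<ge> 0" using V[of 0] by linarith
  have "\<bar>schroedinger_kernel i j\<bar> \<le> (2 * (1 + V)) * (1/2) powr \<bar>real_of_int i - real_of_int j\<bar>" for i j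
  proof -
    consider "j = i + 1" | "j = i - 1" | "j = i" | "j \<noteq> i + 1 \<and> j \<noteq> i - 1 \<and> j \<noteq> i" by blast
    then show ?thesis
    proof cases
      case 1 then show ?thesis using V0 by (simp add: schroedinger_kernel_def)
    next
      case 2 then show ?thesis using V0 by (simp add: schroedinger_kernel_def)
    next
      case 3 then show ?thesis using V[of i] V0 by (simp add: schroedinger_kernel_def)
    next
      case 4 then show ?thesis using V0 by (simp add: schroedinger_kernel_def)
    qed
  qed
  then show ?thesis unfolding exp_kernel_def using V0 by (intro exI[of _ "2 * (1 + V)"]) auto
qed

lemma schroedinger_lp_bounded_linear:
  assumes p: "1 \<le> p"
  shows "lp_bounded_linear p (schroedinger v)"
proof -
  obtain A where kb: "exp_kernel A (1/2) schroedinger_kernel" using schroedinger_exp_kernel by blast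
  have "schroedinger v ` lp_space p \<subseteq> lp_space p"
    using kernel_op_lp(1)[OF p kb] unfolding schroedinger_kernel_op by blast
  moreover have "\<exists>C. \<forall>x\<in>lp_space p. lp_norm p (schroedinger v x) \<le> C * lp_norm p x"
    using kernel_op_lp(2)[OF p kb] unfolding schroedinger_kernel_op by blast
  moreover have "\<forall>x y. schroedinger v (\<lambda>k. x k + y k) = (\<lambda>k. schroedinger v x k + schroedinger v y k)"
    by (auto simp: schroedinger_def fun_eq_iff algebra_simps)
  moreover have "\<forall>c x. schroedinger v (\<lambda>k. c * x k) = (\<lambda>k. c * schroedinger v x k)"
    by (auto simp: schroedinger_def fun_eq_iff algebra_simps)
  ultimately show ?thesis unfolding lp_bounded_linear_def by blast
qed

end

section \<open>Bloch solutions\<close>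

lemma geometric_growth_bounds:
  fixes u :: "int \<Rightarrow> real"
  assumes K: "K \<ge> (1::nat)" and sh: "\<And>n. u (n + int K) = \<mu> * u n" and mu: "\<mu> \<noteq> 0"
    and nz: "\<And>n. u n \<noteq> 0"
  shows "\<exists>c C. c > 0 \<and> C > 0 \<and> (\<forall>n. c * \<bar>\<mu>\<bar> powr (real_of_int n / real K) \<le> \<bar>u n\<bar>
            \<and> \<bar>u n\<bar> \<le> C * \<bar>\<mu>\<bar> powr (real_of_int n / real K))"
proof -
  define f where "f n = \<bar>u n\<bar> / \<bar>\<mu>\<bar> powr (real_of_int n / real K)" for n
  have fper: "f (n + int K) = f n" for n
  proof -
    have "\<bar>\<mu>\<bar> powr (real_of_int (n + int K) / real K) = \<bar>\<mu>\<bar> powr (real_of_int n / real K + 1)"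
      using K by (simp add: add_divide_distrib)
    also have "\<dots> = \<bar>\<mu>\<bar> powr (real_of_int n / real K) * \<bar>\<mu>\<bar>" by (simp add: powr_add)
    finally show ?thesis unfolding f_def sh using mu by (simp add: abs_mult)
  qed
  have fpos: "f n > 0" for n unfolding f_def using nz mu by simp
  define S where "S = f ` {0..<int K}"
  have S: "finite S" "S \<noteq> {}" using K by (auto simp: S_def)
  have fin: "f n \<in> S" for n unfolding S_def by (rule periodic_range[of K f, OF K fper])
  define c where "c = Min S"
  define C where "C = Max S"
  have "c \<in> S" "C \<in> S" using S unfolding c_def C_def by auto
  then have cpos: "c > 0" "C > 0" using fpos unfolding S_def by auto
  have "c \<le> f n" "f n \<le> C" for n using fin[of n] S unfolding c_def C_def by auto
  then have "c * \<bar>\<mu>\<bar> powr (real_of_int n / real K) \<le> \<bar>u n\<bar> \<and> \<bar>u n\<bar> \<le> C * \<bar>\<mu>\<bar> powr (real_of_int n / real K)" for n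
    unfolding f_def using mu by (simp add: field_simps)
  then show ?thesis using cpos by blast
qed

lemma quadratic_root_not_Ints:
  fixes t x :: real
  assumes "t \<in> \<int>" "\<bar>t\<bar> > 2" "x^2 - t * x + 1 = 0"
  shows "x \<notin> \<int>"
proof
  assume "x \<in> \<int>"
  then obtain m where m: "x = of_int m" by (auto elim: Ints_cases)
  obtain T where T: "t = of_int T" using assms(1) by (auto elim: Ints_cases)
  have "real_of_int (m * (T - m)) = 1" using assms(3) unfolding m T by (simp add: power2_eq_square algebra_simps)
  then have "m * (T - m) = 1" by linarith
  then have "(m = 1 \<and> T - m = 1) \<or> (m = -1 \<and> T - m = -1)" by (simp add: zmult_eq_1_iff)
  then have "\<bar>T\<bar> = 2" by auto
  then show False using assms(2) T by simp
qed

locale hyperbolic_potential = periodic_potential +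
  assumes tr_gt_2: "\<bar>tr\<bar> > 2"
begin

definition mu :: real where
  "mu = (if tr > 0 then (tr - sqrt (tr^2 - 4)) / 2 else (tr + sqrt (tr^2 - 4)) / 2)"

lemma tr_square_gt_4: "tr^2 > 4"
proof -
  have "2^2 < \<bar>tr\<bar>^2" by (rule power_strict_mono) (use tr_gt_2 in auto)
  then show ?thesis by simp
qed

lemma mu_root: "mu^2 - tr * mu + 1 = 0"
proof -
  have s: "(sqrt (tr^2 - 4))^2 = tr^2 - 4" using tr_square_gt_4 by simp
  show ?thesis unfolding mu_def using s by (auto simp: power2_eq_square field_simps)
qed

lemma mu_bounds: "0 < \<bar>mu\<bar>" "\<bar>mu\<bar> < 1"
proof -
  have t4: "tr^2 - 4 \<ge> 0" using tr_square_gt_4 by simp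
  define S where "S = sqrt (tr^2 - 4)"
  have S0: "S \<ge> 0" unfolding S_def using t4 by simp
  have S1: "S < \<bar>tr\<bar>"
  proof -
    have "S < sqrt (\<bar>tr\<bar>^2)" unfolding S_def by (rule real_sqrt_less_mono) simp
    then show ?thesis by simp
  qed
  have S2: "\<bar>tr\<bar> - 2 < S"
  proof -
    have "(\<bar>tr\<bar> - 2)^2 = \<bar>tr\<bar>^2 - 4 * \<bar>tr\<bar> + 4" by (simp add: power2_eq_square algebra_simps)
    then have "(\<bar>tr\<bar> - 2)^2 < tr^2 - 4" using tr_gt_2 by simp
    then have "sqrt ((\<bar>tr\<bar> - 2)^2) < S" unfolding S_def by (rule real_sqrt_less_mono)
    then show ?thesis using tr_gt_2 by simp
  qed
  have "\<bar>mu\<bar> = (\<bar>tr\<bar> - S) / 2" unfolding mu_def S_def[symmetric] using S0 S1 by auto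
  then show "0 < \<bar>mu\<bar>" "\<bar>mu\<bar> < 1" using S1 S2 by auto
qed

lemma mu_nonzero: "mu \<noteq> 0" using mu_bounds by auto

lemma mu_inv_root: "(1/mu)^2 - tr * (1/mu) + 1 = 0"
proof -
  have "(1/mu)^2 - tr * (1/mu) + 1 = (mu^2 - tr * mu + 1) / mu^2"
    using mu_nonzero by (simp add: field_simps power2_eq_square)
  then show ?thesis using mu_root by simp
qed

text \<open>For a root \<open>m\<close> of \<open>x^2 - tr x + 1\<close>, the initial vector \<open>(bloch m 0, bloch m (-1))\<close> is an
  eigenvector of the monodromy matrix with eigenvalue \<open>m\<close>.\<close>

definition bloch :: "real \<Rightarrow> int \<Rightarrow> real" where
  "bloch m n = fund_s v (int K) * fund_c v n + (m - fund_c v (int K)) * fund_s v n"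

lemma bloch_solution: "is_solution v (bloch m)"
  unfolding bloch_def by (rule solution_lincomb[OF fund_c_solution fund_s_solution])

lemma bloch_shift:
  assumes root: "m^2 - tr * m + 1 = 0"
  shows "bloch m (n + int K) = m * bloch m n"
proof -
  have s1: "is_solution v (\<lambda>n. bloch m (n + int K))" by (rule solution_shift_period[OF bloch_solution])
  have s2: "is_solution v (\<lambda>n. m * bloch m n + 0 * bloch m n)" by (rule solution_lincomb[OF bloch_solution bloch_solution])
  have d: "fund_c v (int K) * fund_s v (int K - 1) - fund_s v (int K) * fund_c v (int K - 1) = 1" by (rule fund_det)
  have e1: "bloch m (-1 + int K) = m * bloch m (-1)"
  proof -
    have "bloch m (-1 + int K) = fund_s v (int K) * fund_c v (int K - 1) + (m - fund_c v (int K)) * fund_s v (int K - 1)"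
      unfolding bloch_def by (simp add: algebra_simps)
    also have "\<dots> = m * fund_s v (int K - 1) - 1" using d by (simp add: algebra_simps)
    also have "\<dots> = m * (m - fund_c v (int K))"
      using root unfolding tr_def by (simp add: power2_eq_square algebra_simps)
    also have "\<dots> = m * bloch m (-1)" unfolding bloch_def by (simp add: fund_c_minus1 fund_s_minus1)
    finally show ?thesis .
  qed
  have e0: "bloch m (-1 + 1 + int K) = m * bloch m (-1 + 1)"
    unfolding bloch_def by (simp add: fund_c_0 fund_s_0 algebra_simps)
  have "bloch m (n + int K) = m * bloch m n + 0 * bloch m n"
    by (rule solution_eqI[OF s1 s2, where m="-1"]) (use e1 e0 in simp_all)
  then show ?thesis by simp
qed

text \<open>A Bloch solution vanishing at \<open>n\<close> would be a multiple of the integer-valued solution with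
  \<open>u n = 0\<close>, \<open>u (n + 1) = 1\<close>, and then its multiplier \<open>m\<close> would be an integer.\<close>

lemma bloch_nonzero:
  assumes root: "m^2 - tr * m + 1 = 0"
  shows "bloch m n \<noteq> 0"
proof
  assume z: "bloch m n = 0"
  have mi: "m \<notin> \<int>" by (rule quadratic_root_not_Ints[OF tr_Ints tr_gt_2 root])
  have b1: "bloch m (n+1) \<noteq> 0"
  proof
    assume z1: "bloch m (n+1) = 0"
    have zs: "is_solution v (\<lambda>_. 0)" by (simp add: is_solution_def)
    have bz: "bloch m k = 0" for k
      using solution_eqI[OF bloch_solution zs, of m n k] z z1 by simp
    have "bloch m (-1) = m - fund_c v (int K)" unfolding bloch_def by (simp add: fund_c_minus1 fund_s_minus1)
    then have "m = fund_c v (int K)" using bz[of "-1"] by simp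
    then show False using mi fund_c_Ints by metis
  qed
  obtain w where w: "is_solution v w" "w (n+1) = 1" "w (n + 1 - 1) = 0" using solution_exists by blast
  have w0: "w n = 0" using w(3) by simp
  have wi: "w k \<in> \<int>" for k by (rule solution_Ints[OF w(1), where m=n]) (simp_all add: w0 w(2))
  have ws: "is_solution v (\<lambda>k. bloch m (n+1) * w k + 0 * w k)" by (rule solution_lincomb[OF w(1) w(1)])
  have backward_values: "bloch m k = bloch m (n+1) * w k" for k
    using solution_eqI[OF bloch_solution ws, of m n k] z w0 w(2) by simp
  have "bloch m (n + 1 + int K) = m * bloch m (n+1)" by (rule bloch_shift[OF root])
  then have "bloch m (n+1) * w (n + 1 + int K) = m * bloch m (n+1)" unfolding backward_values[of "n + 1 + int K"] .
  then have "w (n + 1 + int K) = m" using b1 by simp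
  then show False using wi mi by metis
qed

definition up :: "int \<Rightarrow> real" where "up = bloch mu"
definition um :: "int \<Rightarrow> real" where "um = bloch (1/mu)"

lemma up_solution: "is_solution v up" and um_solution: "is_solution v um"
  unfolding up_def um_def by (simp_all add: bloch_solution)

lemma up_shift: "up (n + int K) = mu * up n"
  unfolding up_def by (rule bloch_shift[OF mu_root])
lemma um_shift: "um (n + int K) = (1/mu) * um n"
  unfolding um_def by (rule bloch_shift[OF mu_inv_root])
lemma up_nonzero: "up n \<noteq> 0" unfolding up_def by (rule bloch_nonzero[OF mu_root])
lemma um_nonzero: "um n \<noteq> 0" unfolding um_def by (rule bloch_nonzero[OF mu_inv_root])

definition rho :: real where "rho = \<bar>mu\<bar> powr (1 / real K)"

lemma rho_bounds: "0 < rho" "rho < 1"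
proof -
  show "0 < rho" unfolding rho_def using mu_bounds by simp
  have "\<bar>mu\<bar> powr (1 / real K) < 1 powr (1 / real K)"
    by (rule powr_less_mono2) (use K1 mu_bounds in auto)
  then show "rho < 1" unfolding rho_def by simp
qed

lemma rho_powr_pos [simp]: "0 < rho powr x"
  using rho_bounds by simp

lemma rho_powr_antimono: "x \<le> y \<Longrightarrow> rho powr y \<le> rho powr x"
  using rho_bounds by (intro powr_mono') auto

lemma rho_pow: "rho powr x = \<bar>mu\<bar> powr (x / real K)"
  unfolding rho_def powr_powr by simp

definition W0 :: real where "W0 = wronskian um up 0"

lemma W0_const: "wronskian um up n = W0"
  unfolding W0_def by (rule wronskian_const[OF um_solution up_solution])

lemma W0_nonzero: "W0 \<noteq> 0"
proof
  assume W: "W0 = 0"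
  define l where "l = um 0 / up 0"
  have "um (-1) * up 0 = um 0 * up (-1)" using W unfolding W0_def wronskian_def by simp
  then have e: "um (-1) = l * up (-1)" unfolding l_def using up_nonzero[of 0] by (simp add: field_simps)
  have "um k = l * up k + 0 * up k" for k
    by (rule solution_eqI[OF um_solution solution_lincomb[OF up_solution up_solution], where m="-1"])
       (use e up_nonzero[of 0] in \<open>auto simp: l_def\<close>)
  then have ul: "um k = l * up k" for k by simp
  have "(1/mu) * um 0 = um (0 + int K)" using um_shift[of 0] by simp
  also have "\<dots> = l * (mu * up 0)" using ul[of "0 + int K"] up_shift[of 0] by simp
  also have "\<dots> = mu * um 0" using ul[of 0] by simp
  finally have "(1/mu) * um 0 = mu * um 0" .
  then have "1/mu = mu" using um_nonzero[of 0] by (metis mult_right_cancel)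
  then have "mu * mu = 1" using mu_nonzero by (simp add: field_simps)
  moreover have "\<bar>mu\<bar> * \<bar>mu\<bar> < 1 * 1" using mu_bounds by (intro mult_strict_mono) auto
  ultimately show False by (simp add: abs_mult[symmetric])
qed

definition bloch_envelope :: "real \<Rightarrow> real \<Rightarrow> bool" where
  "bloch_envelope c C \<longleftrightarrow> c > 0 \<and> C > 0 \<and>
     (\<forall>n. c * rho powr (real_of_int n) \<le> \<bar>up n\<bar> \<and> \<bar>up n\<bar> \<le> C * rho powr (real_of_int n)
        \<and> c * rho powr (- real_of_int n) \<le> \<bar>um n\<bar> \<and> \<bar>um n\<bar> \<le> C * rho powr (- real_of_int n))"

lemma bloch_envelope_exists: "\<exists>c C. bloch_envelope c C"
proof -
  obtain c1 C1 where up: "c1 > 0" "C1 > 0"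
    "\<And>n. c1 * rho powr (real_of_int n) \<le> \<bar>up n\<bar> \<and> \<bar>up n\<bar> \<le> C1 * rho powr (real_of_int n)"
    using geometric_growth_bounds[of K up mu, OF K1 up_shift mu_nonzero up_nonzero]
    unfolding rho_pow by auto
  have "\<bar>1/mu\<bar> powr (real_of_int n / real K) = rho powr (- real_of_int n)" for n
    unfolding rho_pow by (simp add: powr_minus_divide powr_divide)
  then obtain c2 C2 where um: "c2 > 0" "C2 > 0"
    "\<And>n. c2 * rho powr (- real_of_int n) \<le> \<bar>um n\<bar> \<and> \<bar>um n\<bar> \<le> C2 * rho powr (- real_of_int n)"
    using geometric_growth_bounds[of K um "1/mu", OF K1 um_shift _ um_nonzero] mu_nonzero by auto
  have "min c1 c2 * rho powr x \<le> c1 * rho powr x" "min c1 c2 * rho powr x \<le> c2 * rho powr x"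
    "C1 * rho powr x \<le> max C1 C2 * rho powr x" "C2 * rho powr x \<le> max C1 C2 * rho powr x" for x
    by (simp_all add: mult_right_mono)
  note mono = this
  have "bloch_envelope (min c1 c2) (max C1 C2)"
    unfolding bloch_envelope_def
  proof (intro conjI allI)
    show "min c1 c2 > 0" "max C1 C2 > 0" using up um by auto
    fix n
    show "min c1 c2 * rho powr (real_of_int n) \<le> \<bar>up n\<bar>" "\<bar>up n\<bar> \<le> max C1 C2 * rho powr (real_of_int n)"
      using mono(1,3) up(3)[of n] by (meson order_trans)+
    show "min c1 c2 * rho powr (- real_of_int n) \<le> \<bar>um n\<bar>" "\<bar>um n\<bar> \<le> max C1 C2 * rho powr (- real_of_int n)"
      using mono(2,4) um(3)[of n] by (meson order_trans)+
  qed
  then show ?thesis by blast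
qed

lemma mult_rho_powr_bound:
  assumes "\<bar>x\<bar> \<le> A * rho powr s" "\<bar>y\<bar> \<le> B * rho powr t" "A \<ge> 0" "B \<ge> 0"
  shows "\<bar>x * y\<bar> \<le> (A * B) * rho powr (s + t)"
proof -
  have "\<bar>x * y\<bar> = \<bar>x\<bar> * \<bar>y\<bar>" by (simp add: abs_mult)
  also have "\<dots> \<le> (A * rho powr s) * (B * rho powr t)" using assms by (intro mult_mono) auto
  also have "\<dots> = (A * B) * rho powr (s + t)" by (simp add: powr_add)
  finally show ?thesis .
qed

lemma mult4_rho_powr_bound:
  assumes "\<bar>x1\<bar> \<le> C * rho powr s1" "\<bar>x2\<bar> \<le> C * rho powr s2" "\<bar>x3\<bar> \<le> C * rho powr s3"
    "\<bar>x4\<bar> \<le> C * rho powr s4" "C \<ge> 0"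
  shows "\<bar>x1 * x2 * x3 * x4\<bar> \<le> C^4 * rho powr (s1 + s2 + s3 + s4)"
proof -
  have "\<bar>x1 * x2\<bar> \<le> (C * C) * rho powr (s1 + s2)"
    by (rule mult_rho_powr_bound) (use assms in auto)
  then have "\<bar>x1 * x2 * x3\<bar> \<le> ((C * C) * C) * rho powr (s1 + s2 + s3)"
    by (rule mult_rho_powr_bound) (use assms in auto)
  then have "\<bar>x1 * x2 * x3 * x4\<bar> \<le> (((C * C) * C) * C) * rho powr (s1 + s2 + s3 + s4)"
    by (rule mult_rho_powr_bound) (use assms in auto)
  then show ?thesis by (simp add: power4_eq_xxxx)
qed

end

section \<open>Green's functions\<close>

definition green :: "(int \<Rightarrow> real) \<Rightarrow> (int \<Rightarrow> real) \<Rightarrow> real \<Rightarrow> int \<Rightarrow> int \<Rightarrow> real" where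
  "green \<phi> \<psi> W i j = \<phi> (min i j) * \<psi> (max i j) / W"

lemma green_sym: "green \<phi> \<psi> W i j = green \<phi> \<psi> W j i"
  unfolding green_def by (simp add: min.commute max.commute)

lemma green_equation:
  assumes phi: "is_solution v \<phi>" and psi: "is_solution v \<psi>" and W: "\<And>i. wronskian \<phi> \<psi> i = W" "W \<noteq> 0"
  shows "green \<phi> \<psi> W (i+1) j + green \<phi> \<psi> W (i-1) j + real_of_int (v i) * green \<phi> \<psi> W i j
         = (if i = j then 1 else 0)"
proof -
  have ep: "\<phi> (i+1) + \<phi> (i-1) + real_of_int (v i) * \<phi> i = 0" using phi unfolding is_solution_def by blast
  have es: "\<psi> (i+1) + \<psi> (i-1) + real_of_int (v i) * \<psi> i = 0" using psi unfolding is_solution_def by blast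
  consider "i < j" | "i > j" | "i = j" by linarith
  then show ?thesis
  proof cases
    case 1
    then have "min (i+1) j = i+1" "max (i+1) j = j" "min (i-1) j = i-1" "max (i-1) j = j"
      "min i j = i" "max i j = j" by auto
    then have "green \<phi> \<psi> W (i+1) j + green \<phi> \<psi> W (i-1) j + real_of_int (v i) * green \<phi> \<psi> W i j
        = (\<phi> (i+1) + \<phi> (i-1) + real_of_int (v i) * \<phi> i) * \<psi> j / W"
      unfolding green_def using W(2) by (simp add: field_simps)
    then show ?thesis using ep 1 by simp
  next
    case 2
    then have "min (i+1) j = j" "max (i+1) j = i+1" "min (i-1) j = j" "max (i-1) j = i-1"
      "min i j = j" "max i j = i" by auto
    then have "green \<phi> \<psi> W (i+1) j + green \<phi> \<psi> W (i-1) j + real_of_int (v i) * green \<phi> \<psi> W i j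
        = \<phi> j * (\<psi> (i+1) + \<psi> (i-1) + real_of_int (v i) * \<psi> i) / W"
      unfolding green_def using W(2) by (simp add: field_simps)
    then show ?thesis using es 2 by simp
  next
    case 3
    then have "green \<phi> \<psi> W (i+1) j + green \<phi> \<psi> W (i-1) j + real_of_int (v i) * green \<phi> \<psi> W i j
        = (\<phi> i * \<psi> (i+1) + \<phi> (i-1) * \<psi> i + real_of_int (v i) * \<phi> i * \<psi> i) / W"
      unfolding green_def using W(2) by (simp add: field_simps)
    also have "\<phi> i * \<psi> (i+1) + \<phi> (i-1) * \<psi> i + real_of_int (v i) * \<phi> i * \<psi> i
        = \<phi> i * (\<psi> (i+1) + \<psi> (i-1) + real_of_int (v i) * \<psi> i) + wronskian \<phi> \<psi> i"
      unfolding wronskian_def by (simp add: algebra_simps)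
    also have "\<dots> = W" using es W(1)[of i] by simp
    finally show ?thesis using 3 W(2) by simp
  qed
qed

context hyperbolic_potential
begin

definition G :: "int \<Rightarrow> int \<Rightarrow> real" where "G = green um up W0"

lemma G_equation: "G (i+1) j + G (i-1) j + real_of_int (v i) * G i j = (if i = j then 1 else 0)"
  unfolding G_def by (rule green_equation[OF um_solution up_solution W0_const W0_nonzero])

definition phi :: "nat \<Rightarrow> int \<Rightarrow> real" where
  "phi n i = up (- int n - 1) * um i - um (- int n - 1) * up i"
definition psi :: "nat \<Rightarrow> int \<Rightarrow> real" where
  "psi n j = um (int n + 1) * up j - up (int n + 1) * um j"
definition Dn :: "nat \<Rightarrow> real" where
  "Dn n = up (- int n - 1) * um (int n + 1) - um (- int n - 1) * up (int n + 1)"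

lemma phi_solution: "is_solution v (phi n)"
proof -
  have "is_solution v (\<lambda>i. up (- int n - 1) * um i + (- um (- int n - 1)) * up i)"
    by (rule solution_lincomb[OF um_solution up_solution])
  then show ?thesis unfolding phi_def by simp
qed

lemma psi_solution: "is_solution v (psi n)"
proof -
  have "is_solution v (\<lambda>i. um (int n + 1) * up i + (- up (int n + 1)) * um i)"
    by (rule solution_lincomb[OF up_solution um_solution])
  then show ?thesis unfolding psi_def by simp
qed

lemma wronskian_phi_psi: "wronskian (phi n) (psi n) i = Dn n * W0"
proof -
  have w: "um (i-1) * up i - um i * up (i-1) = W0" using W0_const[of i] unfolding wronskian_def .
  define A where "A = up (- int n - 1)"
  define B where "B = um (- int n - 1)"
  define C where "C = um (int n + 1)"
  define D where "D = up (int n + 1)"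
  have "wronskian (phi n) (psi n) i = (A * C - B * D) * (um (i-1) * up i - um i * up (i-1))"
    unfolding wronskian_def phi_def psi_def A_def[symmetric] B_def[symmetric] C_def[symmetric] D_def[symmetric]
    by (simp add: algebra_simps)
  then show ?thesis unfolding w Dn_def A_def B_def C_def D_def .
qed

lemma phi_left_end: "phi n (- int n - 1) = 0" unfolding phi_def by simp
lemma psi_right_end: "psi n (int n + 1) = 0" unfolding psi_def by simp
lemma phi_right_end: "phi n (int n + 1) = Dn n" unfolding phi_def Dn_def by simp
lemma phi_left_inner: "phi n (- int n) = - W0"
  using W0_const[of "- int n"] unfolding phi_def wronskian_def by (simp add: algebra_simps)

text \<open>\<open>phi n\<close> and \<open>psi n\<close> vanish at \<open>-n-1\<close> and \<open>n+1\<close>, so \<open>Gf n\<close> is the Green's function of the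
  Dirichlet problem on \<open>[-n, n]\<close>; its restriction \<open>Gn n\<close> to the box will be the inverse of the
  finite section.\<close>

definition Gf :: "nat \<Rightarrow> int \<Rightarrow> int \<Rightarrow> real" where
  "Gf n = green (phi n) (psi n) (Dn n * W0)"

lemma Gf_equation: "Dn n \<noteq> 0 \<Longrightarrow> Gf n (i+1) j + Gf n (i-1) j + real_of_int (v i) * Gf n i j = (if i = j then 1 else 0)"
  unfolding Gf_def by (rule green_equation[OF phi_solution psi_solution wronskian_phi_psi]) (use W0_nonzero in simp)

lemma Gf_left: "j \<ge> - int n - 1 \<Longrightarrow> Gf n (- int n - 1) j = 0"
  unfolding Gf_def green_def by (simp add: min_def phi_left_end)
lemma Gf_right: "j \<le> int n + 1 \<Longrightarrow> Gf n (int n + 1) j = 0"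
  unfolding Gf_def green_def by (simp add: max_def psi_right_end)

definition Gn :: "nat \<Rightarrow> int \<Rightarrow> int \<Rightarrow> real" where
  "Gn n i j = (if \<bar>i\<bar> \<le> int n \<and> \<bar>j\<bar> \<le> int n then Gf n i j else 0)"

lemma G_decay: "\<exists>A>0. \<forall>i j. \<bar>G i j\<bar> \<le> A * rho powr \<bar>real_of_int i - real_of_int j\<bar>"
proof -
  obtain c C where "bloch_envelope c C" using bloch_envelope_exists by blast
  then have cC: "c > 0" "C > 0" "\<forall>n. c * rho powr (real_of_int n) \<le> \<bar>up n\<bar> \<and> \<bar>up n\<bar> \<le> C * rho powr (real_of_int n)
   \<and> c * rho powr (- real_of_int n) \<le> \<bar>um n\<bar> \<and> \<bar>um n\<bar> \<le> C * rho powr (- real_of_int n)"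
    unfolding bloch_envelope_def by auto
  define A where "A = C * C / \<bar>W0\<bar>"
  have A: "A > 0" unfolding A_def using cC W0_nonzero by simp
  have le: "\<bar>G i j\<bar> \<le> A * rho powr (real_of_int j - real_of_int i)" if "i \<le> j" for i j
  proof -
    have "\<bar>um i * up j\<bar> \<le> (C * C) * rho powr (- real_of_int i + real_of_int j)"
      by (rule mult_rho_powr_bound) (use cC in auto)
    then show ?thesis using that W0_nonzero unfolding G_def green_def A_def
      by (simp add: abs_mult abs_divide min_def max_def field_simps)
  qed
  have "\<bar>G i j\<bar> \<le> A * rho powr \<bar>real_of_int i - real_of_int j\<bar>" for i j
  proof (cases "i \<le> j")
    case True
    have e: "\<bar>real_of_int i - real_of_int j\<bar> = real_of_int j - real_of_int i" using True by simp
    show ?thesis using le[OF True] unfolding e .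
  next
    case False
    then have "\<bar>G j i\<bar> \<le> A * rho powr (real_of_int i - real_of_int j)" using le[of j i] by simp
    moreover have e: "\<bar>real_of_int i - real_of_int j\<bar> = real_of_int i - real_of_int j" using False by simp
    ultimately show ?thesis unfolding G_def e by (simp add: green_sym)
  qed
  then show ?thesis using A by blast
qed

end

context hyperbolic_potential
begin

lemma G_exp_kernel: "\<exists>A. exp_kernel A rho G"
proof -
  obtain A where A: "A > 0" "\<And>i j. \<bar>G i j\<bar> \<le> A * rho powr \<bar>real_of_int i - real_of_int j\<bar>" using G_decay by blast
  then show ?thesis unfolding exp_kernel_def using rho_bounds by (intro exI[of _ A]) auto
qed

lemma schroedinger_kernel_op_G:
  assumes xb: "\<And>j. norm (x j) \<le> Bx"
  shows "schroedinger v (kernel_op G x) = x"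
proof
  fix n
  obtain A where kb: "exp_kernel A rho G" using G_exp_kernel by blast
  have s: "\<And>i. (\<lambda>j. complex_of_real (G i j) * x j) summable_on UNIV" by (rule kernel_op_summable(1)[OF kb xb])
  have "schroedinger v (kernel_op G x) n = kernel_op G x (n+1) + kernel_op G x (n-1) + of_int (v n) * kernel_op G x n"
    unfolding schroedinger_def ..
  also have "\<dots> = (\<Sum>\<^sub>\<infinity>j. complex_of_real (G (n+1) j) * x j + complex_of_real (G (n-1) j) * x j
      + of_int (v n) * (complex_of_real (G n j) * x j))"
    unfolding kernel_op_def
    by (simp add: infsum_add s summable_on_add summable_on_cmult_right infsum_cmult_right')
  also have "\<dots> = (\<Sum>\<^sub>\<infinity>j. complex_of_real (G (n+1) j + G (n-1) j + real_of_int (v n) * G n j) * x j)"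
    by (simp add: algebra_simps)
  also have "\<dots> = (\<Sum>\<^sub>\<infinity>j. complex_of_real (if n = j then 1 else 0) * x j)" by (simp only: G_equation)
  also have "\<dots> = x n" by (rule infsum_delta)
  finally show "schroedinger v (kernel_op G x) n = x n" .
qed

lemma wronskian_bounded_up:
  assumes y: "is_solution v y" and yb: "\<And>n. \<bar>y n\<bar> \<le> B"
  shows "wronskian y up k = 0"
proof -
  obtain c C where "bloch_envelope c C" using bloch_envelope_exists by blast
  then have C: "C > 0" "\<And>k. \<bar>up k\<bar> \<le> C * rho powr (real_of_int k)"
    unfolding bloch_envelope_def by auto
  have B0: "B \<ge> 0" using yb[of 0] by linarith
  have "wronskian y up 0 = 0"
  proof (rule le_geometric_imp_zero[OF rho_bounds])
    fix m :: nat
    have "\<bar>wronskian y up 0\<bar> = \<bar>y (int m) * up (int m + 1) - y (int m + 1) * up (int m)\<bar>"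
      using wronskian_const[OF y up_solution, of 0 "int m + 1"] unfolding wronskian_def by simp
    also have "\<dots> \<le> \<bar>y (int m)\<bar> * \<bar>up (int m + 1)\<bar> + \<bar>y (int m + 1)\<bar> * \<bar>up (int m)\<bar>"
      by (simp add: abs_mult[symmetric] abs_triangle_ineq4)
    also have "\<dots> \<le> B * (C * rho powr (real m + 1)) + B * (C * rho powr (real m))"
      using C(2)[of "int m + 1"] C(2)[of "int m"] yb B0 by (intro add_mono mult_mono) auto
    also have "\<dots> \<le> (2 * B * C) * rho ^ m"
      using rho_powr_antimono[of "real m" "real m + 1"] B0 C(1) rho_bounds
      by (simp add: algebra_simps mult_left_mono powr_realpow)
    finally show "\<bar>wronskian y up 0\<bar> \<le> (2 * B * C) * rho ^ m" .
  qed
  then show ?thesis using wronskian_const[OF y up_solution, of k 0] by simp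
qed

lemma wronskian_bounded_um:
  assumes y: "is_solution v y" and yb: "\<And>n. \<bar>y n\<bar> \<le> B"
  shows "wronskian y um k = 0"
proof -
  obtain c C where "bloch_envelope c C" using bloch_envelope_exists by blast
  then have C: "C > 0" "\<And>k. \<bar>um k\<bar> \<le> C * rho powr (- real_of_int k)"
    unfolding bloch_envelope_def by auto
  have B0: "B \<ge> 0" using yb[of 0] by linarith
  have "wronskian y um 0 = 0"
  proof (rule le_geometric_imp_zero[OF rho_bounds])
    fix m :: nat
    have "\<bar>wronskian y um 0\<bar> = \<bar>y (- int m - 1) * um (- int m) - y (- int m) * um (- int m - 1)\<bar>"
      using wronskian_const[OF y um_solution, of 0 "- int m"] unfolding wronskian_def by simp
    also have "\<dots> \<le> \<bar>y (- int m - 1)\<bar> * \<bar>um (- int m)\<bar> + \<bar>y (- int m)\<bar> * \<bar>um (- int m - 1)\<bar>"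
      by (simp add: abs_mult[symmetric] abs_triangle_ineq4)
    also have "\<dots> \<le> B * (C * rho powr (real m)) + B * (C * rho powr (1 + real m))"
      using C(2)[of "- int m"] C(2)[of "- int m - 1"] yb B0 by (intro add_mono mult_mono) auto
    also have "\<dots> \<le> (2 * B * C) * rho ^ m"
      using rho_powr_antimono[of "real m" "1 + real m"] B0 C(1) rho_bounds
      by (simp add: algebra_simps mult_left_mono powr_realpow)
    finally show "\<bar>wronskian y um 0\<bar> \<le> (2 * B * C) * rho ^ m" .
  qed
  then show ?thesis using wronskian_const[OF y um_solution, of k 0] by simp
qed

text \<open>A bounded solution is Wronskian-orthogonal to both \<open>up\<close> and \<open>um\<close>, which are independent.\<close>

lemma bounded_solution_zero:
  assumes y: "is_solution v y" and yb: "\<And>n. \<bar>y n\<bar> \<le> B"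
  shows "y n = 0"
proof -
  have "um n * up (n + 1) - um (n + 1) * up n = W0" using W0_const[of "n+1"] unfolding wronskian_def by simp
  then have "y n * W0 = um n * (y n * up (n + 1) - y (n + 1) * up n) - up n * (y n * um (n + 1) - y (n + 1) * um n)"
    by (simp add: algebra_simps flip: \<open>um n * up (n + 1) - um (n + 1) * up n = W0\<close>)
  also have "\<dots> = 0"
    using wronskian_bounded_up[OF y yb, of "n+1"] wronskian_bounded_um[OF y yb, of "n+1"]
    unfolding wronskian_def by simp
  finally show "y n = 0" using W0_nonzero by simp
qed

lemma schroedinger_eq_zero_imp_zero:
  assumes Bx: "\<And>j. norm (x j) \<le> Bx" and x0: "schroedinger v x = (\<lambda>_. 0)"
  shows "x = (\<lambda>_. 0)"
proof -
  have eq: "x (n+1) + x (n-1) + of_int (v n) * x n = 0" for n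
    using fun_cong[OF x0, of n] unfolding schroedinger_def by simp
  have sR: "is_solution v (\<lambda>n. Re (x n))" unfolding is_solution_def
    using arg_cong[OF eq, of Re] by simp
  have sI: "is_solution v (\<lambda>n. Im (x n))" unfolding is_solution_def
    using arg_cong[OF eq, of Im] by simp
  have "Re (x n) = 0" for n
    by (rule bounded_solution_zero[OF sR]) (use Bx abs_Re_le_cmod order_trans in blast)
  moreover have "Im (x n) = 0" for n
    by (rule bounded_solution_zero[OF sI]) (use Bx abs_Im_le_cmod order_trans in blast)
  ultimately show ?thesis by (auto simp: complex_eq_iff)
qed

lemma schroedinger_inj_on_lp:
  assumes p: "1 \<le> p"
  shows "inj_on (schroedinger v) (lp_space p)"
proof (rule inj_onI)
  fix x y assume xy: "x \<in> lp_space p" "y \<in> lp_space p" "schroedinger v x = schroedinger v y"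
  obtain Bx where Bx: "\<And>j. norm (x j) \<le> Bx" using lp_bounded[OF p xy(1)] by blast
  obtain By where By: "\<And>j. norm (y j) \<le> By" using lp_bounded[OF p xy(2)] by blast
  define d where "d k = x k - y k" for k
  have db: "norm (d j) \<le> Bx + By" for j unfolding d_def by (rule order_trans[OF norm_triangle_ineq4 add_mono[OF Bx By]])
  have "schroedinger v d = (\<lambda>_. 0)"
  proof
    fix n
    have "schroedinger v x n = schroedinger v y n" using xy(3) by simp
    then show "schroedinger v d n = 0" unfolding schroedinger_def d_def by (simp add: algebra_simps)
  qed
  then have "d = (\<lambda>_. 0)" by (rule schroedinger_eq_zero_imp_zero[OF db])
  then show "x = y" unfolding d_def by (auto simp: fun_eq_iff)
qed

lemma kernel_op_G_lp:
  assumes p: "1 \<le> p" "y \<in> lp_space p"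
  shows "kernel_op G y \<in> lp_space p"
proof -
  obtain A where kb: "exp_kernel A rho G" using G_exp_kernel by blast
  show ?thesis by (rule kernel_op_lp(1)[OF p(1) kb p(2)])
qed

lemma schroedinger_lp_invertible:
  assumes p: "1 \<le> p"
  shows "lp_invertible p (schroedinger v)"
proof -
  have "lp_space p \<subseteq> schroedinger v ` lp_space p"
  proof
    fix y assume y: "y \<in> lp_space p"
    obtain By where By: "\<And>j. norm (y j) \<le> By" using lp_bounded[OF p y] by blast
    have "y = schroedinger v (kernel_op G y)" using schroedinger_kernel_op_G[OF By] by simp
    then show "y \<in> schroedinger v ` lp_space p" using kernel_op_G_lp[OF p y] by blast
  qed
  moreover have "schroedinger v ` lp_space p \<subseteq> lp_space p"
    using schroedinger_lp_bounded_linear[OF p] unfolding lp_bounded_linear_def by blast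
  ultimately have "bij_betw (schroedinger v) (lp_space p) (lp_space p)"
    unfolding bij_betw_def using schroedinger_inj_on_lp[OF p] by blast
  then show ?thesis unfolding lp_invertible_def using schroedinger_lp_bounded_linear[OF p] by blast
qed

lemma schroedinger_lp_inverse:
  assumes p: "1 \<le> p" and y: "y \<in> lp_space p"
  shows "inv_into (lp_space p) (schroedinger v) y = kernel_op G y"
proof (rule inv_into_f_eq[OF schroedinger_inj_on_lp[OF p] kernel_op_G_lp[OF p y]])
  obtain By where By: "\<And>j. norm (y j) \<le> By" using lp_bounded[OF p y] by blast
  show "schroedinger v (kernel_op G y) = y" by (rule schroedinger_kernel_op_G[OF By])
qed

end

context hyperbolic_potential
begin

lemma Gn_outside: "\<not> (\<bar>i\<bar> \<le> int n \<and> \<bar>j\<bar> \<le> int n) \<Longrightarrow> Gn n i j = 0"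
  unfolding Gn_def by auto

lemma kernel_op_Gn_sum: "kernel_op (Gn n) x i = (\<Sum>j\<in>{- int n..int n}. complex_of_real (Gn n i j) * x j)"
proof -
  have "kernel_op (Gn n) x i = (\<Sum>\<^sub>\<infinity>j\<in>{- int n..int n}. complex_of_real (Gn n i j) * x j)"
    unfolding kernel_op_def by (rule infsum_cong_neutral) (auto simp: Gn_outside)
  then show ?thesis by simp
qed

lemma Gn_equation:
  assumes D: "Dn n \<noteq> 0" and i: "\<bar>i\<bar> \<le> int n" and j: "\<bar>j\<bar> \<le> int n"
  shows "Gn n (i+1) j + Gn n (i-1) j + real_of_int (v i) * Gn n i j = (if i = j then 1 else 0)"
proof -
  have a: "Gn n (i+1) j = Gf n (i+1) j"
  proof (cases "\<bar>i+1\<bar> \<le> int n")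
    case True then show ?thesis using j by (simp add: Gn_def)
  next
    case False then have "i + 1 = int n + 1" using i by auto
    then show ?thesis using Gf_right[where j=j and n=n] j False by (simp add: Gn_def)
  qed
  have b: "Gn n (i-1) j = Gf n (i-1) j"
  proof (cases "\<bar>i-1\<bar> \<le> int n")
    case True then show ?thesis using j by (simp add: Gn_def)
  next
    case False then have "i - 1 = - int n - 1" using i by auto
    then show ?thesis using Gf_left[where j=j and n=n] j False by (simp add: Gn_def)
  qed
  have c: "Gn n i j = Gf n i j" using i j by (simp add: Gn_def)
  show ?thesis unfolding a b c by (rule Gf_equation[OF D])
qed

lemma finite_section_kernel_op_Gn:
  assumes D: "Dn n \<noteq> 0"
  shows "finite_section (schroedinger v) n (kernel_op (Gn n) x) = proj n x"
proof
  fix i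
  define S where "S = {- int n..int n}"
  have ks: "kernel_op (Gn n) x k = (\<Sum>j\<in>S. complex_of_real (Gn n k j) * x j)" for k unfolding S_def by (rule kernel_op_Gn_sum)
  have pr: "proj n (kernel_op (Gn n) x) = kernel_op (Gn n) x"
    by (rule ext) (auto simp: proj_def ks S_def Gn_outside)
  show "finite_section (schroedinger v) n (kernel_op (Gn n) x) i = proj n x i"
  proof (cases "\<bar>i\<bar> \<le> int n")
    case True
    have tm: "complex_of_real (Gn n (i+1) j) * x j + complex_of_real (Gn n (i-1) j) * x j
        + of_int (v i) * (complex_of_real (Gn n i j) * x j) = (if i = j then x j else 0)" if j: "j \<in> S" for j
    proof -
      have jj: "\<bar>j\<bar> \<le> int n" using j unfolding S_def by auto
      have e: "Gn n (i+1) j + Gn n (i-1) j + real_of_int (v i) * Gn n i j = (if i = j then 1 else 0)"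
        by (rule Gn_equation[OF D True jj])
      have "complex_of_real (Gn n (i+1) j) + complex_of_real (Gn n (i-1) j) + of_int (v i) * complex_of_real (Gn n i j)
          = complex_of_real (if i = j then 1 else 0)"
        unfolding e[symmetric] by simp
      then have "(complex_of_real (Gn n (i+1) j) + complex_of_real (Gn n (i-1) j) + of_int (v i) * complex_of_real (Gn n i j)) * x j
          = complex_of_real (if i = j then 1 else 0) * x j" by simp
      then show ?thesis by (cases "i = j") (simp_all add: algebra_simps)
    qed
    have "schroedinger v (kernel_op (Gn n) x) i
        = (\<Sum>j\<in>S. complex_of_real (Gn n (i+1) j) * x j + complex_of_real (Gn n (i-1) j) * x j
          + of_int (v i) * (complex_of_real (Gn n i j) * x j))"
      unfolding schroedinger_def ks by (simp add: sum.distrib sum_distrib_left)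
    also have "\<dots> = (\<Sum>j\<in>S. (if i = j then x j else 0))"
      by (rule sum.cong[OF refl tm])
    also have "\<dots> = x i"
    proof -
      have "i \<in> S" using True unfolding S_def by auto
      then show ?thesis by (subst sum.delta') (auto simp: S_def)
    qed
    finally show ?thesis unfolding finite_section_def pr using True by (simp add: proj_def)
  next
    case False
    then show ?thesis unfolding finite_section_def by (simp add: proj_def)
  qed
qed

lemma kernel_op_Gn_fs_dom: "kernel_op (Gn n) x \<in> fs_dom n"
  unfolding fs_dom_def by (auto simp: kernel_op_Gn_sum Gn_outside)

lemma finite_section_eq_zero_imp_zero:
  assumes D: "Dn n \<noteq> 0" and y: "y \<in> fs_dom n" and fy: "finite_section (schroedinger v) n y = (\<lambda>_. 0)"
  shows "y = (\<lambda>_. 0)"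
proof -
  define a where "a = - int n - 1"
  have yo: "\<bar>k\<bar> > int n \<Longrightarrow> y k = 0" for k using y unfolding fs_dom_def by auto
  have py: "proj n y = y" by (rule ext) (auto simp: proj_def yo)
  have Hy: "y (i+1) + y (i-1) + of_int (v i) * y i = 0" if "a < i" "i < int n + 1" for i
  proof -
    have "\<bar>i\<bar> \<le> int n" using that unfolding a_def by auto
    then show ?thesis using fun_cong[OF fy, of i] unfolding finite_section_def py
      by (simp add: proj_def schroedinger_def)
  qed
  have "phi n (a + 1) \<noteq> 0" using phi_left_inner[of n] W0_nonzero unfolding a_def by simp
  define l where "l = y (a + 1) / complex_of_real (phi n (a + 1))"
  have "y a = l * phi n a" "y (a + 1) = l * phi n (a + 1)"
    using yo[of a] phi_left_end[of n] \<open>phi n (a + 1) \<noteq> 0\<close> unfolding l_def a_def by simp_all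
  note agree = complex_solution_agrees[OF phi_solution Hy this]
  have "l * Dn n = 0" using agree[of "int n + 1"] yo[of "int n + 1"] phi_right_end[of n] unfolding a_def by simp
  then have "l = 0" using D by simp
  show ?thesis
  proof
    fix k
    show "y k = 0"
      using agree[of k] \<open>l = 0\<close> yo[of k] unfolding a_def by (cases "\<bar>k\<bar> \<le> int n") auto
  qed
qed

lemma fs_invertible_schroedinger:
  assumes D: "Dn n \<noteq> 0"
  shows "fs_invertible (schroedinger v) n"
proof -
  let ?f = "finite_section (schroedinger v) n"
  have lin: "?f (\<lambda>k. y1 k - y2 k) = (\<lambda>k. ?f y1 k - ?f y2 k)" for y1 y2
    by (rule ext) (auto simp: finite_section_def proj_def schroedinger_def algebra_simps)
  have inj: "inj_on ?f (fs_dom n)"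
  proof (rule inj_onI)
    fix y1 y2 assume y: "y1 \<in> fs_dom n" "y2 \<in> fs_dom n" "?f y1 = ?f y2"
    have d: "(\<lambda>k. y1 k - y2 k) \<in> fs_dom n" using y unfolding fs_dom_def by auto
    have "?f (\<lambda>k. y1 k - y2 k) = (\<lambda>_. 0)" unfolding lin using y(3) by simp
    then have "(\<lambda>k. y1 k - y2 k) = (\<lambda>_. 0)" by (rule finite_section_eq_zero_imp_zero[OF D d])
    then show "y1 = y2" by (auto simp: fun_eq_iff)
  qed
  have "?f ` fs_dom n \<subseteq> fs_dom n" unfolding finite_section_def fs_dom_def proj_def by auto
  moreover have "fs_dom n \<subseteq> ?f ` fs_dom n"
  proof
    fix z assume z: "z \<in> fs_dom n"
    have "proj n z = z" using z unfolding fs_dom_def proj_def by (auto simp: fun_eq_iff)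
    then have "?f (kernel_op (Gn n) z) = z" using finite_section_kernel_op_Gn[OF D, of z] by simp
    then show "z \<in> ?f ` fs_dom n" using kernel_op_Gn_fs_dom by (metis image_eqI)
  qed
  ultimately show ?thesis unfolding fs_invertible_def bij_betw_def using inj by blast
qed

lemma fs_inverse_schroedinger:
  assumes D: "Dn n \<noteq> 0"
  shows "fs_inverse_embedded (schroedinger v) n x = kernel_op (Gn n) x"
proof -
  have ij: "inj_on (finite_section (schroedinger v) n) (fs_dom n)"
    using fs_invertible_schroedinger[OF D] unfolding fs_invertible_def bij_betw_def by blast
  show ?thesis unfolding fs_inverse_embedded_def
    by (rule inv_into_f_eq) (use ij kernel_op_Gn_fs_dom finite_section_kernel_op_Gn[OF D] in auto)
qed

end

section \<open>The finite-section Green's function converges to \<open>G\<close>\<close>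

lemma box_exponent_inside:
  fixes ri rj rn :: real
  assumes "ri \<le> rj" "\<bar>ri\<bar> \<le> rn" "\<bar>rj\<bar> \<le> rn"
  shows "(\<bar>ri - rj\<bar> + rn - min \<bar>ri\<bar> \<bar>rj\<bar>) / 4 \<le> 2 * rn + 2 - ri - rj"
    "(\<bar>ri - rj\<bar> + rn - min \<bar>ri\<bar> \<bar>rj\<bar>) / 4 \<le> 2 * rn + 2 + ri + rj"
    "(\<bar>ri - rj\<bar> + rn - min \<bar>ri\<bar> \<bar>rj\<bar>) / 4 \<le> 4 * rn + 4 + ri - rj"
    "(\<bar>ri - rj\<bar> + rn - min \<bar>ri\<bar> \<bar>rj\<bar>) / 4 \<le> 4 * rn + 4 - ri + rj"
  using assms by (simp_all add: min_def split: if_splits; linarith)+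

lemma box_exponent_outside:
  fixes ri rj rn :: real
  assumes "\<not> (\<bar>ri\<bar> \<le> rn \<and> \<bar>rj\<bar> \<le> rn)"
  shows "(\<bar>ri - rj\<bar> + rn - min \<bar>ri\<bar> \<bar>rj\<bar>) / 4 \<le> \<bar>ri - rj\<bar>"
proof -
  define d x y where "d = \<bar>ri - rj\<bar>" and "x = \<bar>ri\<bar>" and "y = \<bar>rj\<bar>"
  have "y - x \<le> d" "x - y \<le> d" "0 \<le> d" "\<not> (x \<le> rn \<and> y \<le> rn)"
    unfolding d_def x_def y_def using assms
    by (metis abs_minus_commute abs_triangle_ineq2, metis abs_triangle_ineq2, simp_all)
  then have "d + rn - min x y \<le> 4 * d" by (auto simp: min_def)
  then show ?thesis unfolding d_def x_def y_def by simp
qed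

lemma green_difference_formula:
  fixes Pa Ma Pb Mb Pi Mi Pj Mj W :: real
  assumes "Pa * Mb - Ma * Pb \<noteq> 0" "W \<noteq> 0"
  shows "(Pa * Mi - Ma * Pi) * (Mb * Pj - Pb * Mj) / ((Pa * Mb - Ma * Pb) * W) - Mi * Pj / W
    = (- (Pa * Pb * Mi * Mj) - Ma * Mb * Pi * Pj + Ma * Pb * (Pi * Mj + Mi * Pj)) / ((Pa * Mb - Ma * Pb) * W)"
  using assms by (simp add: field_simps)

context hyperbolic_potential
begin

text \<open>Inside the box \<open>[-n, n]\<^sup>2\<close>, \<open>Gn n - G\<close> is small both off the diagonal and away from the
  boundary of the box: it decays like \<open>rho\<close> raised to \<open>box_exponent n i j\<close>.\<close>

definition box_exponent :: "nat \<Rightarrow> int \<Rightarrow> int \<Rightarrow> real" where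
  "box_exponent n i j = (\<bar>real_of_int i - real_of_int j\<bar> + real n - min \<bar>real_of_int i\<bar> \<bar>real_of_int j\<bar>) / 4"

lemma box_exponent_sym: "box_exponent n i j = box_exponent n j i"
  unfolding box_exponent_def by (simp add: abs_minus_commute min.commute)

lemma Gn_sym: "Gn n i j = Gn n j i"
  unfolding Gn_def Gf_def by (auto simp: green_sym)

lemma G_sym: "G i j = G j i"
  unfolding G_def by (rule green_sym)

lemma eventually_envelope_small:
  assumes "bloch_envelope c C"
  shows "\<exists>N. \<forall>n\<ge>N. C * C * rho powr (4 * real n + 4) \<le> c * c / 2"
proof -
  have B: "c > 0" "C > 0" using assms unfolding bloch_envelope_def by auto
  define \<delta> where "\<delta> = c * c / (2 * (C * C))"
  have "\<delta> > 0" using B by (simp add: \<delta>_def)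
  moreover have "(\<lambda>k. rho ^ k) \<longlonglongrightarrow> 0" by (rule LIMSEQ_realpow_zero) (use rho_bounds in auto)
  ultimately have "\<forall>\<^sub>F k in sequentially. rho ^ k < \<delta>" by (simp add: order_tendstoD(2))
  then obtain N where N: "rho ^ N < \<delta>" by (auto simp: eventually_sequentially)
  have "C * C * rho powr (4 * real n + 4) \<le> c * c / 2" if "n \<ge> N" for n
  proof -
    have "rho powr (4 * real n + 4) \<le> rho powr (real N)" by (rule rho_powr_antimono) (use that in simp)
    also have "rho powr (real N) = rho ^ N" using rho_bounds by (simp add: powr_realpow)
    finally have "rho powr (4 * real n + 4) \<le> \<delta>" using N by simp
    then have "C * C * rho powr (4 * real n + 4) \<le> C * C * \<delta>" using B by (intro mult_left_mono) auto
    also have "\<dots> = c * c / 2" using B by (simp add: \<delta>_def field_simps)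
    finally show ?thesis .
  qed
  then show ?thesis by blast
qed

lemma Dn_lower:
  assumes cC: "bloch_envelope c C" and small: "C * C * rho powr (4 * real n + 4) \<le> c * c / 2"
  shows "\<bar>Dn n\<bar> \<ge> c * c / 2 * rho powr (- (2 * real n + 2))"
proof -
  define a where "a = - int n - 1"
  define b where "b = int n + 1"
  have ra: "real_of_int a = - real n - 1" and rb: "real_of_int b = real n + 1" by (simp_all add: a_def b_def)
  have B: "c > 0" "C > 0" "\<And>k. c * rho powr (real_of_int k) \<le> \<bar>up k\<bar>" "\<And>k. \<bar>up k\<bar> \<le> C * rho powr (real_of_int k)"
     "\<And>k. c * rho powr (- real_of_int k) \<le> \<bar>um k\<bar>" "\<And>k. \<bar>um k\<bar> \<le> C * rho powr (- real_of_int k)"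
    using cC unfolding bloch_envelope_def by auto
  have l1: "c * c * rho powr (- (2 * real n + 2)) \<le> \<bar>up a * um b\<bar>"
  proof -
    have "(c * rho powr (real_of_int a)) * (c * rho powr (- real_of_int b)) \<le> \<bar>up a\<bar> * \<bar>um b\<bar>"
      using B by (intro mult_mono) (auto simp: less_imp_le)
    moreover have "(c * rho powr (real_of_int a)) * (c * rho powr (- real_of_int b))
        = c * c * rho powr (real_of_int a + - real_of_int b)"
      unfolding powr_add[of rho "real_of_int a" "- real_of_int b"] by simp
    moreover have "real_of_int a + - real_of_int b = - (2 * real n + 2)" unfolding ra rb by simp
    ultimately show ?thesis by (simp add: abs_mult)
  qed
  have l2: "\<bar>um a * up b\<bar> \<le> c * c / 2 * rho powr (- (2 * real n + 2))"
  proof -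
    have "\<bar>um a * up b\<bar> \<le> (C * C) * rho powr (- real_of_int a + real_of_int b)"
      by (rule mult_rho_powr_bound) (use B in \<open>auto simp: less_imp_le\<close>)
    also have "- real_of_int a + real_of_int b = (4 * real n + 4) + (- (2 * real n + 2))"
      unfolding ra rb by simp
    also have "(C * C) * rho powr \<dots> = (C * C * rho powr (4 * real n + 4)) * rho powr (- (2 * real n + 2))"
      unfolding powr_add[of rho "4 * real n + 4" "- (2 * real n + 2)"] by (simp only: mult.assoc)
    also have "\<dots> \<le> (c * c / 2) * rho powr (- (2 * real n + 2))"
      by (rule mult_right_mono[OF small]) simp
    finally show ?thesis .
  qed
  have "\<bar>Dn n\<bar> \<ge> \<bar>up a * um b\<bar> - \<bar>um a * up b\<bar>" unfolding Dn_def a_def b_def by simp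
  moreover have "c * c / 2 * rho powr (- (2 * real n + 2)) = c * c * rho powr (- (2 * real n + 2)) / 2"
    by simp
  ultimately show ?thesis using l1 l2 by linarith
qed

lemma Gn_minus_G_formula:
  assumes a: "a = - int n - 1" and b: "b = int n + 1" and D: "Dn n \<noteq> 0"
    and ij: "i \<le> j" "\<bar>i\<bar> \<le> int n" "\<bar>j\<bar> \<le> int n"
  shows "Gn n i j - G i j = (- (up a * up b * um i * um j) - um a * um b * up i * up j
    + (um a * up b * up i * um j + um a * up b * um i * up j)) / ((up a * um b - um a * up b) * W0)"
proof -
  have gn: "Gn n i j = (up a * um i - um a * up i) * (um b * up j - up b * um j) / ((up a * um b - um a * up b) * W0)"
    unfolding Gn_def Gf_def green_def phi_def psi_def Dn_def a b using ij by simp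
  have g: "G i j = um i * up j / W0" unfolding G_def green_def using ij by simp
  have "up a * um b - um a * up b \<noteq> 0" using D unfolding Dn_def a b .
  then have "Gn n i j - G i j = (- (up a * up b * um i * um j) - um a * um b * up i * up j
      + um a * up b * (up i * um j + um i * up j)) / ((up a * um b - um a * up b) * W0)"
    unfolding gn g by (rule green_difference_formula[OF _ W0_nonzero])
  then show ?thesis by (simp only: distrib_left mult.assoc)
qed

lemma Gn_minus_G_box_ordered:
  assumes cC: "bloch_envelope c C" and small: "C * C * rho powr (4 * real n + 4) \<le> c * c / 2"
    and ij: "i \<le> j" "\<bar>i\<bar> \<le> int n" "\<bar>j\<bar> \<le> int n"
  shows "\<bar>Gn n i j - G i j\<bar> \<le> (8 * C^4 / (c * c * \<bar>W0\<bar>)) * rho powr (box_exponent n i j)"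
proof -
  define a where "a = - int n - 1"
  define b where "b = int n + 1"
  define X where "X = box_exponent n i j"
  define m where "m = - (2 * real n + 2)"
  have ra: "real_of_int a = - real n - 1" and rb: "real_of_int b = real n + 1" by (simp_all add: a_def b_def)
  have B: "c > 0" "C > 0" "\<And>k. \<bar>up k\<bar> \<le> C * rho powr (real_of_int k)"
     "\<And>k. \<bar>um k\<bar> \<le> C * rho powr (- real_of_int k)"
    using cC unfolding bloch_envelope_def by auto
  have DL: "\<bar>up a * um b - um a * up b\<bar> \<ge> c * c / 2 * rho powr m"
    using Dn_lower[OF cC small] unfolding m_def Dn_def a_def b_def .
  have DLp: "c * c / 2 * rho powr m > 0" using B(1) rho_bounds by (simp add: zero_less_mult_iff)
  have "Dn n \<noteq> 0" using DL DLp unfolding Dn_def a_def b_def by auto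
  define num where "num = - (up a * up b * um i * um j) - um a * um b * up i * up j
    + (um a * up b * up i * um j + um a * up b * um i * up j)"
  have eq: "Gn n i j - G i j = num / ((up a * um b - um a * up b) * W0)"
    unfolding num_def by (rule Gn_minus_G_formula[OF a_def b_def \<open>Dn n \<noteq> 0\<close> ij])
  txt \<open>Each of the four terms of \<open>num\<close> is at most \<open>C^4 * rho powr (X + m)\<close>.\<close>
  have term_bound: "C^4 * rho powr s \<le> C^4 * (rho powr X * rho powr m)" if "X \<le> s - m" for s
  proof -
    have "rho powr s = rho powr (s - m) * rho powr m" using powr_add[of rho "s - m" m] by simp
    also have "\<dots> \<le> rho powr X * rho powr m" by (rule mult_right_mono[OF rho_powr_antimono[OF that]]) simp
    finally show ?thesis using B by (intro mult_left_mono) auto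
  qed
  have "real_of_int i \<le> real_of_int j" "\<bar>real_of_int i\<bar> \<le> real n" "\<bar>real_of_int j\<bar> \<le> real n"
    using ij by linarith+
  note ex = box_exponent_inside[OF this]
  have x1: "X \<le> (real_of_int a + real_of_int b + - real_of_int i + - real_of_int j) - m"
    and x2: "X \<le> (- real_of_int a + - real_of_int b + real_of_int i + real_of_int j) - m"
    and x3: "X \<le> (- real_of_int a + real_of_int b + real_of_int i + - real_of_int j) - m"
    and x4: "X \<le> (- real_of_int a + real_of_int b + - real_of_int i + real_of_int j) - m"
    using ex unfolding X_def box_exponent_def m_def ra rb by linarith+
  have C0: "C \<ge> 0" using B by simp
  have "\<bar>up a * up b * um i * um j\<bar> \<le> C^4 * (rho powr X * rho powr m)"
    using mult4_rho_powr_bound[OF B(3)[of a] B(3)[of b] B(4)[of i] B(4)[of j] C0] term_bound[OF x1] by linarith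
  moreover have "\<bar>um a * um b * up i * up j\<bar> \<le> C^4 * (rho powr X * rho powr m)"
    using mult4_rho_powr_bound[OF B(4)[of a] B(4)[of b] B(3)[of i] B(3)[of j] C0] term_bound[OF x2] by linarith
  moreover have "\<bar>um a * up b * up i * um j\<bar> \<le> C^4 * (rho powr X * rho powr m)"
    using mult4_rho_powr_bound[OF B(4)[of a] B(3)[of b] B(3)[of i] B(4)[of j] C0] term_bound[OF x3] by linarith
  moreover have "\<bar>um a * up b * um i * up j\<bar> \<le> C^4 * (rho powr X * rho powr m)"
    using mult4_rho_powr_bound[OF B(4)[of a] B(3)[of b] B(4)[of i] B(3)[of j] C0] term_bound[OF x4] by linarith
  ultimately have nb: "\<bar>num\<bar> \<le> 4 * (C^4 * (rho powr X * rho powr m))"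
    unfolding num_def by linarith
  have den: "\<bar>(up a * um b - um a * up b) * W0\<bar> \<ge> c * c / 2 * rho powr m * \<bar>W0\<bar>"
    using DL unfolding abs_mult by (intro mult_right_mono) auto
  have denp: "c * c / 2 * rho powr m * \<bar>W0\<bar> > 0" using DLp W0_nonzero by simp
  have "\<bar>Gn n i j - G i j\<bar> = \<bar>num\<bar> / \<bar>(up a * um b - um a * up b) * W0\<bar>" unfolding eq by (simp add: abs_divide)
  also have "\<dots> \<le> (4 * (C^4 * (rho powr X * rho powr m))) / (c * c / 2 * rho powr m * \<bar>W0\<bar>)"
    by (rule frac_le[OF _ nb denp den]) simp
  also have "\<dots> = (8 * C^4 / (c * c * \<bar>W0\<bar>)) * rho powr X"
    using B W0_nonzero by (simp add: field_simps)
  finally show ?thesis unfolding X_def .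
qed

lemma Gn_minus_G_box:
  assumes "bloch_envelope c C" "C * C * rho powr (4 * real n + 4) \<le> c * c / 2"
    and "\<bar>i\<bar> \<le> int n" "\<bar>j\<bar> \<le> int n"
  shows "\<bar>Gn n i j - G i j\<bar> \<le> (8 * C^4 / (c * c * \<bar>W0\<bar>)) * rho powr (box_exponent n i j)"
proof (cases "i \<le> j")
  case True
  then show ?thesis using Gn_minus_G_box_ordered assms by blast
next
  case False
  then have "\<bar>Gn n j i - G j i\<bar> \<le> (8 * C^4 / (c * c * \<bar>W0\<bar>)) * rho powr (box_exponent n j i)"
    using Gn_minus_G_box_ordered assms by simp
  then show ?thesis by (simp add: Gn_sym G_sym box_exponent_sym)
qed

lemma Gn_minus_G_estimate:
  "\<exists>N A. A > 0 \<and> (\<forall>n\<ge>N. Dn n \<noteq> 0 \<and> (\<forall>i j. \<bar>Gn n i j - G i j\<bar> \<le> A * rho powr (box_exponent n i j)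
    \<and> \<bar>Gn n i j - G i j\<bar> \<le> A * rho powr (\<bar>real_of_int i - real_of_int j\<bar> / 4)))"
proof -
  obtain c C where cC: "bloch_envelope c C" using bloch_envelope_exists by blast
  then have B: "c > 0" "C > 0" unfolding bloch_envelope_def by auto
  obtain AG where AG: "AG > 0" "\<And>i j. \<bar>G i j\<bar> \<le> AG * rho powr \<bar>real_of_int i - real_of_int j\<bar>"
    using G_decay by blast
  obtain N where small: "\<And>n. n \<ge> N \<Longrightarrow> C * C * rho powr (4 * real n + 4) \<le> c * c / 2"
    using eventually_envelope_small[OF cC] by blast
  define A where "A = max (8 * C^4 / (c * c * \<bar>W0\<bar>)) AG"
  have A: "A \<ge> 8 * C^4 / (c * c * \<bar>W0\<bar>)" "A \<ge> AG" "A > 0" using AG unfolding A_def by auto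
  have "c * c / 2 * rho powr (- (2 * real n + 2)) > 0" for n
    using B(1) rho_bounds by (simp add: zero_less_mult_iff)
  then have "Dn n \<noteq> 0" if n: "n \<ge> N" for n
    using Dn_lower[OF cC small[OF n]] by (metis abs_zero not_le)
  moreover have "\<bar>Gn n i j - G i j\<bar> \<le> A * rho powr (box_exponent n i j)
      \<and> \<bar>Gn n i j - G i j\<bar> \<le> A * rho powr (\<bar>real_of_int i - real_of_int j\<bar> / 4)" if n: "n \<ge> N" for n i j
  proof (cases "\<bar>i\<bar> \<le> int n \<and> \<bar>j\<bar> \<le> int n")
    case True
    have "min \<bar>real_of_int i\<bar> \<bar>real_of_int j\<bar> \<le> real n" using True by linarith
    then have "\<bar>real_of_int i - real_of_int j\<bar> / 4 \<le> box_exponent n i j"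
      unfolding box_exponent_def by (simp add: field_simps)
    then have "rho powr (box_exponent n i j) \<le> rho powr (\<bar>real_of_int i - real_of_int j\<bar> / 4)"
      by (rule rho_powr_antimono)
    moreover have "\<bar>Gn n i j - G i j\<bar> \<le> A * rho powr (box_exponent n i j)"
      using Gn_minus_G_box[OF cC small[OF n]] True A(1)
      by (meson mult_right_mono order_trans rho_powr_pos less_imp_le)
    ultimately show ?thesis using A(3) by (meson mult_left_mono less_imp_le order_trans)
  next
    case False
    have "box_exponent n i j \<le> \<bar>real_of_int i - real_of_int j\<bar>"
      unfolding box_exponent_def by (rule box_exponent_outside) (use False in linarith)
    then have "rho powr \<bar>real_of_int i - real_of_int j\<bar> \<le> rho powr (box_exponent n i j)"
      and "rho powr \<bar>real_of_int i - real_of_int j\<bar> \<le> rho powr (\<bar>real_of_int i - real_of_int j\<bar> / 4)"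
      by (simp_all add: rho_powr_antimono)
    moreover have "Gn n i j = 0" using False unfolding Gn_def by auto
    then have "\<bar>Gn n i j - G i j\<bar> \<le> AG * rho powr \<bar>real_of_int i - real_of_int j\<bar>"
      using AG(2)[of i j] by simp
    ultimately show ?thesis using A(2) AG(1)
      by (meson mult_mono order_trans rho_powr_pos less_imp_le)
  qed
  ultimately show ?thesis using A(3) by blast
qed

definition s4 :: real where "s4 = rho powr (1/4)"

lemma s4_bounds: "0 < s4" "s4 < 1"
proof -
  show "0 < s4" unfolding s4_def using rho_bounds by simp
  have "rho powr (1/4) < 1 powr (1/4)" by (rule powr_less_mono2) (use rho_bounds in auto)
  then show "s4 < 1" unfolding s4_def by simp
qed

lemma rho_powr_quarter: "rho powr (y / 4) = s4 powr y" unfolding s4_def powr_powr by simp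

lemma rho_powr_box_exponent_le:
  "rho powr (box_exponent n i j) \<le> s4 powr \<bar>real_of_int i - real_of_int j\<bar> * s4 powr (real n - \<bar>real_of_int i\<bar>)"
  "rho powr (box_exponent n i j) \<le> s4 powr \<bar>real_of_int i - real_of_int j\<bar> * s4 powr (real n - \<bar>real_of_int j\<bar>)"
proof -
  have "rho powr (box_exponent n i j) \<le> rho powr ((\<bar>real_of_int i - real_of_int j\<bar> + (real n - \<bar>real_of_int k\<bar>)) / 4)"
    if "k = i \<or> k = j" for k
    by (rule rho_powr_antimono) (use that in \<open>auto simp: box_exponent_def field_simps min_def\<close>)
  then show "rho powr (box_exponent n i j) \<le> s4 powr \<bar>real_of_int i - real_of_int j\<bar> * s4 powr (real n - \<bar>real_of_int i\<bar>)"
    "rho powr (box_exponent n i j) \<le> s4 powr \<bar>real_of_int i - real_of_int j\<bar> * s4 powr (real n - \<bar>real_of_int j\<bar>)"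
    unfolding rho_powr_quarter by (simp_all add: powr_add)
qed

definition Kn :: "nat \<Rightarrow> int \<Rightarrow> int \<Rightarrow> real" where "Kn n i j = Gn n i j - G i j"

lemma Kn_bounds:
  obtains N B where "\<And>n. n \<ge> N \<Longrightarrow> Dn n \<noteq> 0" "\<And>n. n \<ge> N \<Longrightarrow> exp_kernel B s4 (Kn n)"
    "\<And>n. n \<ge> N \<Longrightarrow> exp_kernel B s4 (Gn n)" "exp_kernel B s4 G"
    "\<And>n i j. n \<ge> N \<Longrightarrow> \<bar>Kn n i j\<bar> \<le> B * s4 powr \<bar>real_of_int i - real_of_int j\<bar> * s4 powr (real n - \<bar>real_of_int i\<bar>)"
    "\<And>n i j. n \<ge> N \<Longrightarrow> \<bar>Kn n i j\<bar> \<le> B * s4 powr \<bar>real_of_int i - real_of_int j\<bar> * s4 powr (real n - \<bar>real_of_int j\<bar>)"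
proof -
  obtain N A where A: "A > 0" "\<And>n. n \<ge> N \<Longrightarrow> Dn n \<noteq> 0"
    "\<And>n i j. n \<ge> N \<Longrightarrow> \<bar>Kn n i j\<bar> \<le> A * rho powr (box_exponent n i j)"
    "\<And>n i j. n \<ge> N \<Longrightarrow> \<bar>Kn n i j\<bar> \<le> A * s4 powr \<bar>real_of_int i - real_of_int j\<bar>"
    using Gn_minus_G_estimate unfolding Kn_def rho_powr_quarter by meson
  obtain AG where AG: "AG > 0" "\<And>i j. \<bar>G i j\<bar> \<le> AG * rho powr \<bar>real_of_int i - real_of_int j\<bar>"
    using G_decay by blast
  define B where "B = A + AG"
  have B: "B > 0" "A \<le> B" "AG \<le> B" using A AG unfolding B_def by auto
  have s: "0 < s4" "s4 < 1" by (rule s4_bounds)+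
  have G_s4: "\<bar>G i j\<bar> \<le> AG * s4 powr \<bar>real_of_int i - real_of_int j\<bar>" for i j
  proof -
    have "rho powr \<bar>real_of_int i - real_of_int j\<bar> \<le> s4 powr \<bar>real_of_int i - real_of_int j\<bar>"
      unfolding rho_powr_quarter[symmetric] by (rule rho_powr_antimono) simp
    then show ?thesis using AG(2)[of i j] AG(1) by (meson mult_left_mono less_imp_le order_trans)
  qed
  have scale: "A * x \<le> B * x" "AG * x \<le> B * x" if "x \<ge> 0" for x
    using B that by (simp_all add: mult_right_mono)
  have kG: "exp_kernel B s4 G" unfolding exp_kernel_def using s B G_s4 scale by (meson order_trans powr_ge_zero less_imp_le)
  have kK: "exp_kernel B s4 (Kn n)" and kGn: "exp_kernel B s4 (Gn n)" if n: "n \<ge> N" for n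
  proof -
    have "\<bar>Gn n i j\<bar> \<le> (A + AG) * s4 powr \<bar>real_of_int i - real_of_int j\<bar>" for i j
    proof -
      have "\<bar>Gn n i j\<bar> \<le> \<bar>Kn n i j\<bar> + \<bar>G i j\<bar>" unfolding Kn_def by linarith
      then show ?thesis using A(4)[OF n, of i j] G_s4[of i j] by (simp add: algebra_simps)
    qed
    then show "exp_kernel B s4 (Gn n)" unfolding exp_kernel_def B_def using s A AG by auto
    show "exp_kernel B s4 (Kn n)"
      unfolding exp_kernel_def using s B A(4)[OF n] scale by (meson order_trans powr_ge_zero less_imp_le)
  qed
  have "\<bar>Kn n i j\<bar> \<le> B * s4 powr \<bar>real_of_int i - real_of_int j\<bar> * s4 powr (real n - \<bar>real_of_int i\<bar>)"
    "\<bar>Kn n i j\<bar> \<le> B * s4 powr \<bar>real_of_int i - real_of_int j\<bar> * s4 powr (real n - \<bar>real_of_int j\<bar>)"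
    if n: "n \<ge> N" for n i j
    using A(3)[OF n, of i j] rho_powr_box_exponent_le[of n i j] A(1) scale
    by (simp_all only: mult.assoc) (meson mult_left_mono order_trans less_imp_le powr_ge_zero mult_nonneg_nonneg)+
  then show ?thesis using that[OF A(2) kK kGn kG] by blast
qed

end

section \<open>Strong convergence of the inverses of the finite sections\<close>

context hyperbolic_potential
begin

lemma fs_inverse_minus_inverse:
  assumes p: "1 \<le> p" and y: "y \<in> lp_space p" and D: "Dn n \<noteq> 0"
    and kGn: "exp_kernel A s (Gn n)" and kG: "exp_kernel A' s' G"
  shows "(\<lambda>k. fs_inverse_embedded (schroedinger v) n y k - inv_into (lp_space p) (schroedinger v) y k)
    = kernel_op (Kn n) y"
proof
  obtain By where By: "\<And>j. norm (y j) \<le> By" using lp_bounded[OF p y] by blast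
  fix k
  show "fs_inverse_embedded (schroedinger v) n y k - inv_into (lp_space p) (schroedinger v) y k = kernel_op (Kn n) y k"
    unfolding fs_inverse_schroedinger[OF D] schroedinger_lp_inverse[OF p y] kernel_op_diff[OF kGn kG By] Kn_def ..
qed

lemma Kn_column_sum:
  assumes kK: "exp_kernel B s4 (Kn n)"
    and Kj: "\<And>i j. \<bar>Kn n i j\<bar> \<le> B * s4 powr \<bar>real_of_int i - real_of_int j\<bar> * s4 powr (real n - \<bar>real_of_int j\<bar>)"
    and F: "finite F"
  shows "(\<Sum>i\<in>F. \<bar>Kn n i j\<bar>) \<le> B * (2 / (1 - s4)) * min 1 (s4 powr (real n - \<bar>real_of_int j\<bar>))"
proof -
  have B: "B \<ge> 0" and s: "0 < s4" "s4 < 1" using kK unfolding exp_kernel_def by auto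
  have c1: "(\<Sum>i\<in>F. \<bar>Kn n i j\<bar>) \<le> B * (2 / (1 - s4))" by (rule exp_kernel_col[OF kK F])
  have kb: "exp_kernel B s4 (\<lambda>i j. B * s4 powr \<bar>real_of_int i - real_of_int j\<bar>)"
    unfolding exp_kernel_def using s B by simp
  have "(\<Sum>i\<in>F. \<bar>Kn n i j\<bar>)
      \<le> (\<Sum>i\<in>F. \<bar>B * s4 powr \<bar>real_of_int i - real_of_int j\<bar>\<bar>) * s4 powr (real n - \<bar>real_of_int j\<bar>)"
    unfolding sum_distrib_right by (rule sum_mono) (use Kj B in simp)
  also have "\<dots> \<le> B * (2 / (1 - s4)) * s4 powr (real n - \<bar>real_of_int j\<bar>)"
    by (rule mult_right_mono[OF exp_kernel_col[OF kb F]]) simp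
  finally show ?thesis using c1 by (simp add: min_def)
qed

lemma Kn_lp_norm_le:
  assumes r: "r \<ge> 1" and x: "x \<in> lp_space (ereal r)" and kK: "exp_kernel B s4 (Kn n)"
    and Kj: "\<And>i j. \<bar>Kn n i j\<bar> \<le> B * s4 powr \<bar>real_of_int i - real_of_int j\<bar> * s4 powr (real n - \<bar>real_of_int j\<bar>)"
  shows "lp_norm (ereal r) (kernel_op (Kn n) x)
    \<le> B * (2 / (1 - s4)) * (\<Sum>\<^sub>\<infinity>j. min 1 (s4 powr (real n - \<bar>real_of_int j\<bar>)) * norm (x j) powr r) powr (1 / r)"
proof -
  define R where "R = B * (2 / (1 - s4))"
  define T where "T = (\<Sum>\<^sub>\<infinity>j. min 1 (s4 powr (real n - \<bar>real_of_int j\<bar>)) * norm (x j) powr r)"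
  have s: "0 < s4" "s4 < 1" and R0: "R \<ge> 0" using kK unfolding exp_kernel_def R_def by auto
  obtain Bx where Bx: "\<And>j. norm (x j) \<le> Bx" using lp_bounded[of "ereal r" x] r x by auto
  have xs: "(\<lambda>j. norm (x j) powr r) summable_on UNIV" using x by (simp add: lp_space_def)
  define c where "c j = R * min 1 (s4 powr (real n - \<bar>real_of_int j\<bar>))" for j
  have col: "(\<Sum>i\<in>F. \<bar>Kn n i j\<bar>) \<le> c j" if "finite F" for j F
    unfolding c_def R_def by (rule Kn_column_sum[OF kK Kj that])
  have cs: "(\<lambda>j. c j * norm (x j) powr r) summable_on UNIV"
  proof (rule summable_on_comparison_test[OF summable_on_cmult_right[OF xs, of R]])
    fix j
    have "c j \<le> R" unfolding c_def using R0 by (intro mult_left_le) auto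
    then show "c j * norm (x j) powr r \<le> R * norm (x j) powr r" by (intro mult_right_mono) auto
    show "0 \<le> c j * norm (x j) powr r" unfolding c_def using R0 s by simp
  qed
  have ic: "(\<Sum>\<^sub>\<infinity>j. c j * norm (x j) powr r) = R * T"
    unfolding c_def T_def by (simp add: mult.assoc infsum_cmult_right')
  have T0: "T \<ge> 0" unfolding T_def by (rule infsum_nonneg) simp
  have "(\<Sum>\<^sub>\<infinity>i. norm (kernel_op (Kn n) x i) powr r) \<le> R powr (r - 1) * (R * T)"
    using kernel_op_lp_estimate(2)[OF r kK Bx col cs] unfolding ic R_def .
  also have "R powr (r - 1) * (R * T) = R powr r * T"
    using R0 r by (cases "R = 0") (simp_all add: powr_diff field_simps)
  finally have le: "(\<Sum>\<^sub>\<infinity>i. norm (kernel_op (Kn n) x i) powr r) \<le> R powr r * T" .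
  have "lp_norm (ereal r) (kernel_op (Kn n) x) = (\<Sum>\<^sub>\<infinity>i. norm (kernel_op (Kn n) x i) powr r) powr (1 / r)"
    by (simp add: lp_norm_def)
  also have "\<dots> \<le> (R powr r * T) powr (1 / r)"
    by (rule powr_mono2) (use le r in \<open>auto intro: infsum_nonneg\<close>)
  also have "\<dots> = R * T powr (1 / r)" using R0 r T0 by (simp add: powr_mult powr_powr)
  finally show ?thesis unfolding R_def T_def .
qed

lemma strongly_converges_finite:
  assumes r: "r \<ge> 1"
  shows "strongly_converges (ereal r) (fs_inverse_embedded (schroedinger v))
    (inv_into (lp_space (ereal r)) (schroedinger v))"
  unfolding strongly_converges_def
proof (simp, intro ballI)
  obtain N B where B: "\<And>n. n \<ge> N \<Longrightarrow> Dn n \<noteq> 0" "\<And>n. n \<ge> N \<Longrightarrow> exp_kernel B s4 (Kn n)"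
    "\<And>n. n \<ge> N \<Longrightarrow> exp_kernel B s4 (Gn n)" "exp_kernel B s4 G"
    "\<And>n i j. n \<ge> N \<Longrightarrow> \<bar>Kn n i j\<bar> \<le> B * s4 powr \<bar>real_of_int i - real_of_int j\<bar> * s4 powr (real n - \<bar>real_of_int i\<bar>)"
    "\<And>n i j. n \<ge> N \<Longrightarrow> \<bar>Kn n i j\<bar> \<le> B * s4 powr \<bar>real_of_int i - real_of_int j\<bar> * s4 powr (real n - \<bar>real_of_int j\<bar>)"
    using Kn_bounds by blast
  fix x assume x: "x \<in> lp_space (ereal r)"
  define T where "T n = (\<Sum>\<^sub>\<infinity>j. min 1 (s4 powr (real n - \<bar>real_of_int j\<bar>)) * norm (x j) powr r)" for n :: nat
  have "(\<lambda>n. min 1 (s4 powr (real n - \<bar>real_of_int j\<bar>))) \<longlonglongrightarrow> 0" for j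
  proof -
    have "(\<lambda>n. s4 powr (- \<bar>real_of_int j\<bar>) * s4 ^ n) \<longlonglongrightarrow> s4 powr (- \<bar>real_of_int j\<bar>) * 0"
      using s4_bounds by (intro tendsto_mult tendsto_const LIMSEQ_realpow_zero) auto
    moreover have "s4 powr (real n - \<bar>real_of_int j\<bar>) = s4 powr (- \<bar>real_of_int j\<bar>) * s4 ^ n" for n
      using s4_bounds by (simp add: powr_add[symmetric] powr_realpow[symmetric])
    ultimately have "(\<lambda>n. min 1 (s4 powr (real n - \<bar>real_of_int j\<bar>))) \<longlonglongrightarrow> min 1 0"
      by (intro tendsto_min tendsto_const) simp
    then show ?thesis by simp
  qed
  then have "T \<longlonglongrightarrow> 0" unfolding T_def
    by (intro infsum_weighted_tendsto_zero) (use x s4_bounds in \<open>simp_all add: lp_space_def\<close>)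
  moreover have "T n \<ge> 0" for n unfolding T_def by (rule infsum_nonneg) simp
  ultimately have "(\<lambda>n. T n powr (1 / r)) \<longlonglongrightarrow> 0"
    by (intro tendsto_zero_powrI) (use r in auto)
  then have lim: "(\<lambda>n. B * (2 / (1 - s4)) * T n powr (1 / r)) \<longlonglongrightarrow> 0"
    by (rule tendsto_mult_right_zero)
  have "norm (lp_norm (ereal r) (\<lambda>k. fs_inverse_embedded (schroedinger v) n x k
      - inv_into (lp_space (ereal r)) (schroedinger v) x k)) \<le> B * (2 / (1 - s4)) * T n powr (1 / r)"
    if n: "n \<ge> N" for n
  proof -
    have "(\<lambda>k. fs_inverse_embedded (schroedinger v) n x k - inv_into (lp_space (ereal r)) (schroedinger v) x k)
        = kernel_op (Kn n) x"
      by (rule fs_inverse_minus_inverse[OF _ x B(1)[OF n] B(3)[OF n] B(4)]) (use r in simp)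
    moreover have "lp_norm (ereal r) (kernel_op (Kn n) x) \<ge> 0" by (simp add: lp_norm_def)
    ultimately show ?thesis using Kn_lp_norm_le[OF r x B(2)[OF n] B(6)[OF n]] unfolding T_def by simp
  qed
  then show "(\<lambda>n. lp_norm (ereal r) (\<lambda>k. fs_inverse_embedded (schroedinger v) n x k
      - inv_into (lp_space (ereal r)) (schroedinger v) x k)) \<longlonglongrightarrow> 0"
    by (intro Lim_null_comparison[OF _ lim]) (auto simp: eventually_sequentially)
qed

text \<open>For \<open>p = \<infinity>\<close>: near the support of \<open>proj m\<close>, the kernel \<open>Kn n\<close> is of size
  \<open>s4 powr (n - m)\<close>.\<close>

lemma Kn_proj_linf_bound:
  assumes kK: "exp_kernel B s4 (Kn n)"
    and Ki: "\<And>i j. \<bar>Kn n i j\<bar> \<le> B * s4 powr \<bar>real_of_int i - real_of_int j\<bar> * s4 powr (real n - \<bar>real_of_int i\<bar>)"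
    and Kj: "\<And>i j. \<bar>Kn n i j\<bar> \<le> B * s4 powr \<bar>real_of_int i - real_of_int j\<bar> * s4 powr (real n - \<bar>real_of_int j\<bar>)"
    and x: "\<And>j. norm (x j) \<le> 1"
  shows "norm (proj m (kernel_op (Kn n) x) i) \<le> B * s4 powr (real n - real m) * (2 / (1 - s4))"
    and "norm (kernel_op (Kn n) (proj m x) i) \<le> B * s4 powr (real n - real m) * (2 / (1 - s4))"
proof -
  have B: "B \<ge> 0" and s: "0 < s4" "s4 < 1" using kK unfolding exp_kernel_def by auto
  have A'0: "B * s4 powr (real n - real m) \<ge> 0" using B by simp
  have pmono: "s4 powr (real n - t) \<le> s4 powr (real n - real m)" if "t \<le> real m" for t
    using that s by (intro powr_mono') auto
  show "norm (proj m (kernel_op (Kn n) x) i) \<le> B * s4 powr (real n - real m) * (2 / (1 - s4))"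
  proof (cases "\<bar>i\<bar> \<le> int m")
    case True
    have "norm (kernel_op (Kn n) x i) \<le> B * s4 powr (real n - real m) * (2 / (1 - s4))"
    proof (rule kernel_op_pointwise_bound[OF kK x _ A'0])
      fix j
      have "\<bar>Kn n i j\<bar> * norm (x j) \<le> \<bar>Kn n i j\<bar>" using x[of j] by (simp add: mult_left_le)
      also have "\<dots> \<le> B * s4 powr \<bar>real_of_int i - real_of_int j\<bar> * s4 powr (real n - real m)"
      proof -
        have "\<bar>real_of_int i\<bar> \<le> real m" using True by (metis of_int_abs of_int_le_iff of_int_of_nat_eq)
        then have "s4 powr (real n - \<bar>real_of_int i\<bar>) \<le> s4 powr (real n - real m)" by (rule pmono)
        then show ?thesis using Ki[of i j] B by (meson order_trans mult_left_mono mult_nonneg_nonneg powr_ge_zero)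
      qed
      finally show "\<bar>Kn n i j\<bar> * norm (x j) \<le> B * s4 powr (real n - real m) * s4 powr \<bar>real_of_int i - real_of_int j\<bar>"
        by (simp add: mult_ac)
    qed
    then show ?thesis using True by (simp add: proj_def)
  next
    case False
    then show ?thesis using A'0 s by (simp add: proj_def)
  qed
  have pm: "norm (proj m x j) \<le> 1" for j using x[of j] by (simp add: proj_def)
  show "norm (kernel_op (Kn n) (proj m x) i) \<le> B * s4 powr (real n - real m) * (2 / (1 - s4))"
  proof (rule kernel_op_pointwise_bound[OF kK pm _ A'0])
    fix j
    show "\<bar>Kn n i j\<bar> * norm (proj m x j) \<le> B * s4 powr (real n - real m) * s4 powr \<bar>real_of_int i - real_of_int j\<bar>"
    proof (cases "\<bar>j\<bar> \<le> int m")
      case True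
      have "\<bar>Kn n i j\<bar> * norm (proj m x j) \<le> \<bar>Kn n i j\<bar>" using pm[of j] by (simp add: mult_left_le)
      also have "\<dots> \<le> B * s4 powr \<bar>real_of_int i - real_of_int j\<bar> * s4 powr (real n - real m)"
      proof -
        have "\<bar>real_of_int j\<bar> \<le> real m" using True by (metis of_int_abs of_int_le_iff of_int_of_nat_eq)
        then have "s4 powr (real n - \<bar>real_of_int j\<bar>) \<le> s4 powr (real n - real m)" by (rule pmono)
        then show ?thesis using Kj[of i j] B by (meson order_trans mult_left_mono mult_nonneg_nonneg powr_ge_zero)
      qed
      finally show ?thesis by (simp add: mult_ac)
    next
      case False
      then show ?thesis using A'0 by (simp add: proj_def)
    qed
  qed
qed

lemma strongly_converges_infinity:
  "strongly_converges \<infinity> (fs_inverse_embedded (schroedinger v)) (inv_into (lp_space \<infinity>) (schroedinger v))"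
proof -
  obtain N B where B: "\<And>n. n \<ge> N \<Longrightarrow> Dn n \<noteq> 0" "\<And>n. n \<ge> N \<Longrightarrow> exp_kernel B s4 (Kn n)"
    "\<And>n. n \<ge> N \<Longrightarrow> exp_kernel B s4 (Gn n)" "exp_kernel B s4 G"
    "\<And>n i j. n \<ge> N \<Longrightarrow> \<bar>Kn n i j\<bar> \<le> B * s4 powr \<bar>real_of_int i - real_of_int j\<bar> * s4 powr (real n - \<bar>real_of_int i\<bar>)"
    "\<And>n i j. n \<ge> N \<Longrightarrow> \<bar>Kn n i j\<bar> \<le> B * s4 powr \<bar>real_of_int i - real_of_int j\<bar> * s4 powr (real n - \<bar>real_of_int j\<bar>)"
    using Kn_bounds by blast
  have s: "0 < s4" "s4 < 1" by (rule s4_bounds)+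
  have p1: "1 \<le> (\<infinity>::ereal)" by simp
  have "\<forall>\<^sub>F n in sequentially. \<forall>x\<in>lp_space \<infinity>. lp_norm \<infinity> x \<le> 1 \<longrightarrow>
      lp_norm \<infinity> (proj m (\<lambda>k. fs_inverse_embedded (schroedinger v) n x k - inv_into (lp_space \<infinity>) (schroedinger v) x k)) \<le> \<epsilon> \<and>
      lp_norm \<infinity> (\<lambda>k. fs_inverse_embedded (schroedinger v) n (proj m x) k - inv_into (lp_space \<infinity>) (schroedinger v) (proj m x) k) \<le> \<epsilon>"
    if e: "\<epsilon> > 0" for m \<epsilon>
  proof -
    define Z where "Z n = B * s4 powr (real n - real m) * (2 / (1 - s4))" for n :: nat
    have "Z = (\<lambda>n. (B * s4 powr (- real m) * (2 / (1 - s4))) * s4 ^ n)"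
      unfolding Z_def using s by (simp add: fun_eq_iff powr_add[symmetric] powr_realpow[symmetric])
    then have "Z \<longlonglongrightarrow> (B * s4 powr (- real m) * (2 / (1 - s4))) * 0"
      by (simp only:) (intro tendsto_mult tendsto_const LIMSEQ_realpow_zero; use s in auto)
    then have "\<forall>\<^sub>F n in sequentially. Z n < \<epsilon>" using e by (intro order_tendstoD(2)) auto
    moreover have "\<forall>\<^sub>F n in sequentially. n \<ge> N" by (simp add: eventually_ge_at_top)
    ultimately show ?thesis
    proof (rule eventually_elim2, intro ballI impI conjI)
      fix n x assume Zn: "Z n < \<epsilon>" and n: "n \<ge> N" and x: "x \<in> lp_space \<infinity>" and x1: "lp_norm \<infinity> x \<le> 1"
      have xb: "norm (x j) \<le> 1" for j using linf_norm_ge(2)[OF x, of j] x1 by linarith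
      have "bounded (range (proj m x))" unfolding bounded_iff proj_def using xb by (intro exI[of _ 1]) auto
      then have pm: "proj m x \<in> lp_space \<infinity>" by (simp add: lp_space_def)
      note diff = fs_inverse_minus_inverse[OF p1 _ B(1)[OF n] B(3)[OF n] B(4)]
      have "lp_norm \<infinity> (proj m (kernel_op (Kn n) x)) \<le> Z n" "lp_norm \<infinity> (kernel_op (Kn n) (proj m x)) \<le> Z n"
        unfolding Z_def by (rule linf_norm_le, rule Kn_proj_linf_bound[OF B(2)[OF n] B(5)[OF n] B(6)[OF n] xb])+
      note bound = this
      show "lp_norm \<infinity> (proj m (\<lambda>k. fs_inverse_embedded (schroedinger v) n x k - inv_into (lp_space \<infinity>) (schroedinger v) x k)) \<le> \<epsilon>"
        unfolding diff[OF x] using bound(1) Zn by simp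
      show "lp_norm \<infinity> (\<lambda>k. fs_inverse_embedded (schroedinger v) n (proj m x) k - inv_into (lp_space \<infinity>) (schroedinger v) (proj m x) k) \<le> \<epsilon>"
        unfolding diff[OF pm] using bound(2) Zn by simp
    qed
  qed
  then show ?thesis unfolding strongly_converges_def by simp
qed

lemma fsm_applicable_hyperbolic:
  assumes p: "1 \<le> p"
  shows "fsm_applicable p (schroedinger v)"
proof -
  obtain N where "\<And>n. n \<ge> N \<Longrightarrow> Dn n \<noteq> 0" using Kn_bounds by metis
  then have ev: "\<forall>\<^sub>F n in sequentially. fs_invertible (schroedinger v) n"
    unfolding eventually_sequentially using fs_invertible_schroedinger by blast
  have sc: "strongly_converges p (fs_inverse_embedded (schroedinger v)) (inv_into (lp_space p) (schroedinger v))"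
  proof (cases "p = \<infinity>")
    case True then show ?thesis using strongly_converges_infinity by simp
  next
    case False
    then obtain r where r: "p = ereal r" using p by (cases p) auto
    with p have "r \<ge> 1" by simp
    then show ?thesis using strongly_converges_finite r by simp
  qed
  show ?thesis unfolding fsm_applicable_def using schroedinger_lp_invertible[OF p] ev sc by blast
qed

end

theorem theorem3p14:
  fixes p :: ereal and v :: "int \<Rightarrow> int" and K :: nat
  assumes "1 \<le> p"
    and "K \<ge> 1"
    and "\<forall>n. v (n + int K) = v n"
  shows "fsm_applicable p (schroedinger v) \<longleftrightarrow> \<bar>trace (monodromy v K 0)\<bar> > 2"
proof -
  interpret periodic_potential v K using assms(2,3) by unfold_locales
  have tr: "trace (monodromy v K 0) = tr" unfolding tr_def by (rule trace_monodromy)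
  show ?thesis
  proof
    assume "fsm_applicable p (schroedinger v)"
    then show "\<bar>trace (monodromy v K 0)\<bar> > 2" using fsm_applicable_imp_hyperbolic[OF assms(1)] tr by simp
  next
    assume "\<bar>trace (monodromy v K 0)\<bar> > 2"
    then have "\<bar>tr\<bar> > 2" using tr by simp
    then interpret hyperbolic_potential v K by unfold_locales
    show "fsm_applicable p (schroedinger v)" by (rule fsm_applicable_hyperbolic[OF assms(1)])
  qed
qed

end
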